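(* Let $F$ be a nontrivial finite group, $\tfrac12<p<1$, $\lambda=\frac{p}{1-p}$, $\alpha=\frac{\log|F|}{\log\lambda}$, and let $R_n=((L_n(i))_i,S_n)$ be the stationary random walk on $F\wr\mathbb{Z}$ with parameter $p$. Let $\rho_0=0$ and $\rho_k=\inf\{n>\rho_{k-1}:S_n=0\}$. Then there exist constants $k_0$ and $0<c\le C$ depending only on $p$ and $|F|$ such that for all integers $k\ge k_0$, \[\frac{c}{k^{2\alpha}}\le\Pr(R_{\rho_k}=\mathrm{id})\le\frac{C}{k^{2\alpha}}.\]
   Context: Elements of $F\wr\mathbb{Z}$ are pairs $((L(i))_{i\in\mathbb{Z}},x)$ with $L:\mathbb{Z}\to F$ finitely supported and $x\in\mathbb{Z}$; $\mathrm{id}$ has all lamps $\mathrm{id}_F$ and $x=0$. $(S_n)$ is the Markov chain on $\mathbb{Z}$ with $S_0=0$ and $\Pr(S_{n+1}=x+1\mid S_n=x)$ equal to $p,\tfrac12,1-p$ for $x<0,x=0,x>0$ respectively, and $\Pr(S_{n+1}=x-1\mid S_n=x)$ equal to $1-p,\tfrac12,p$ respectively. $(U_n,V_n)_{n\ge1}$ are i.i.d. pairs of independent uniform elements of $F$, independent of $(S_n)$; $L_0\equiv\mathrm{id}_F$, $L_{n+1}(i)=L_n(i)$ for $i\notin\{S_n,S_{n+1}\}$, $L_{n+1}(S_n)=U_{n+1}$, $L_{n+1}(S_{n+1})=V_{n+1}$. *)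

theory Defs
  imports "HOL-Probability.Probability" "HOL-Algebra.Group"
begin

text \<open>Randomness for step n+1: a coin C ~ Bernoulli(p), a fair coin D, and
  independent uniform elements U, V of the carrier of the lamp group.\<close>

definition step_pmf :: "real \<Rightarrow> ('a, 'b) monoid_scheme \<Rightarrow> (bool \<times> bool \<times> 'a \<times> 'a) pmf" where
  "step_pmf p G = pair_pmf (bernoulli_pmf p)
      (pair_pmf (bernoulli_pmf (1/2)) (pair_pmf (pmf_of_set (carrier G)) (pmf_of_set (carrier G))))"

definition walk_space :: "real \<Rightarrow> ('a, 'b) monoid_scheme \<Rightarrow> (bool \<times> bool \<times> 'a \<times> 'a) stream measure" where
  "walk_space p G = stream_space (measure_pmf (step_pmf p G))"

definition incr :: "int \<Rightarrow> bool \<Rightarrow> bool \<Rightarrow> int" where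
  "incr x c d = (if x < 0 then (if c then 1 else -1)
                 else if x > 0 then (if c then -1 else 1)
                 else (if d then 1 else -1))"

fun Spos :: "(bool \<times> bool \<times> 'a \<times> 'a) stream \<Rightarrow> nat \<Rightarrow> int" where
  "Spos \<omega> 0 = 0"
| "Spos \<omega> (Suc n) = (case \<omega> !! n of (c, d, u, v) \<Rightarrow> Spos \<omega> n + incr (Spos \<omega> n) c d)"

fun Lamps :: "('a, 'b) monoid_scheme \<Rightarrow> (bool \<times> bool \<times> 'a \<times> 'a) stream \<Rightarrow> nat \<Rightarrow> int \<Rightarrow> 'a" where
  "Lamps G \<omega> 0 = (\<lambda>i. \<one>\<^bsub>G\<^esub>)"
| "Lamps G \<omega> (Suc n) = (case \<omega> !! n of (c, d, u, v) \<Rightarrow>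
      ((Lamps G \<omega> n)(Spos \<omega> n := u))(Spos \<omega> (Suc n) := v))"

fun rho :: "(bool \<times> bool \<times> 'a \<times> 'a) stream \<Rightarrow> nat \<Rightarrow> enat" where
  "rho \<omega> 0 = 0"
| "rho \<omega> (Suc k) = Inf {enat m | m. rho \<omega> k < enat m \<and> Spos \<omega> m = 0}"

text \<open>R_n = id in the wreath product: all lamps identity and position 0.\<close>
definition is_id_at :: "('a, 'b) monoid_scheme \<Rightarrow> (bool \<times> bool \<times> 'a \<times> 'a) stream \<Rightarrow> nat \<Rightarrow> bool" where
  "is_id_at G \<omega> n \<longleftrightarrow> Lamps G \<omega> n = (\<lambda>i. \<one>\<^bsub>G\<^esub>) \<and> Spos \<omega> n = 0"

end

theory Submission
  imports Defs
begin

text \<open>Only whether a lamp shows the identity matters, and a freshly randomised lamp does so with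
  probability \<open>q = 1 / |F|\<close>. At the \<open>k\<close>-th return to 0 every lamp of the visited range
  \<open>[lo, hi]\<close> has been randomised, so the probability in question is the expectation of
  \<open>q ^ (hi - lo + 1)\<close> at that time, a potential of the chain (position, minimum, maximum, number
  of returns). It is compared with explicit sub- and supersolutions built from gambler's ruin
  probabilities: an excursion from 0 returns before reaching distance \<open>m + 1\<close> with probability
  \<open>1 - O(lam ^ (-m))\<close>, so after \<open>k\<close> excursions the range has length about \<open>2 log k / log lam\<close>,
  and \<open>q\<close> to that power is \<open>k ^ (-2 alpha)\<close>.\<close>

section \<open>Potentials of the range chain\<close>

text \<open>States \<open>(y, lo, hi, c)\<close> of the base walk: position, minimum and maximum of the positions
  visited so far, and number of returns to 0.\<close>

type_synonym range_state = "int \<times> int \<times> int \<times> nat"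

definition up_prob :: "real \<Rightarrow> int \<Rightarrow> real" where
  "up_prob p y = (if y < 0 then p else if y > 0 then 1 - p else 1/2)"

definition move :: "int \<Rightarrow> range_state \<Rightarrow> range_state" where
  "move d \<tau> = (case \<tau> of (y, lo, hi, c) \<Rightarrow>
     (y + d, min lo (y + d), max hi (y + d), if y + d = 0 then Suc c else c))"

definition step_op :: "real \<Rightarrow> (range_state \<Rightarrow> ennreal) \<Rightarrow> range_state \<Rightarrow> ennreal" where
  "step_op p f \<tau> =
     ennreal (up_prob p (fst \<tau>)) * f (move 1 \<tau>) + ennreal (1 - up_prob p (fst \<tau>)) * f (move (-1) \<tau>)"

definition step_op_real :: "real \<Rightarrow> (range_state \<Rightarrow> real) \<Rightarrow> range_state \<Rightarrow> real" where
  "step_op_real p f \<tau> = up_prob p (fst \<tau>) * f (move 1 \<tau>) + (1 - up_prob p (fst \<tau>)) * f (move (-1) \<tau>)"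

definition potential :: "real \<Rightarrow> (range_state \<Rightarrow> ennreal) \<Rightarrow> range_state \<Rightarrow> ennreal" where
  "potential p f \<tau> = (\<Sum>n. (step_op p ^^ n) f \<tau>)"

definition step_closed :: "range_state set \<Rightarrow> bool" where
  "step_closed A \<longleftrightarrow> (\<forall>\<tau>\<in>A. move 1 \<tau> \<in> A \<and> move (-1) \<tau> \<in> A)"

definition range_states :: "range_state set" where
  "range_states = {(y, lo, hi, c). lo \<le> 0 \<and> 0 \<le> hi \<and> lo \<le> y \<and> y \<le> hi}"

lemma step_closed_range_states: "step_closed range_states"
  unfolding step_closed_def range_states_def move_def by auto

lemma up_prob_bounds: "0 \<le> p \<Longrightarrow> p \<le> 1 \<Longrightarrow> 0 \<le> up_prob p y \<and> up_prob p y \<le> 1"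
  unfolding up_prob_def by auto

lemma step_op_mono_on:
  assumes "step_closed A" "\<tau> \<in> A" "\<And>\<sigma>. \<sigma> \<in> A \<Longrightarrow> f \<sigma> \<le> g \<sigma>"
  shows "step_op p f \<tau> \<le> step_op p g \<tau>"
  using assms unfolding step_op_def step_closed_def by (intro add_mono mult_left_mono) auto

lemma step_op_cong_on:
  assumes "step_closed A" "\<tau> \<in> A" "\<And>\<sigma>. \<sigma> \<in> A \<Longrightarrow> f \<sigma> = g \<sigma>"
  shows "step_op p f \<tau> = step_op p g \<tau>"
  using assms unfolding step_op_def step_closed_def by auto

lemma step_op_add: "step_op p (\<lambda>\<sigma>. f \<sigma> + g \<sigma>) \<tau> = step_op p f \<tau> + step_op p g \<tau>"
  unfolding step_op_def by (simp add: distrib_left add_ac)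

lemma step_op_sum: "step_op p (\<lambda>\<sigma>. \<Sum>i\<in>I. f i \<sigma>) \<tau> = (\<Sum>i\<in>I. step_op p (f i) \<tau>)"
  unfolding step_op_def by (simp add: sum_distrib_left sum.distrib)

lemma step_op_suminf: "step_op p (\<lambda>\<sigma>. \<Sum>i. f i \<sigma>) \<tau> = (\<Sum>i. step_op p (f i) \<tau>)"
  unfolding step_op_def by (subst suminf_add[symmetric]) (auto intro: summableI)

lemma step_op_nn_integral:
  "step_op p (\<lambda>\<sigma>. \<integral>\<^sup>+z. f z \<sigma> \<partial>measure_pmf M) \<tau> = (\<integral>\<^sup>+z. step_op p (f z) \<tau> \<partial>measure_pmf M)"
  unfolding step_op_def by (simp add: nn_integral_cmult nn_integral_add)

lemma step_op_ennreal:
  assumes "0 \<le> p" "p \<le> 1" "0 \<le> f (move 1 \<tau>)" "0 \<le> f (move (-1) \<tau>)"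
  shows "step_op p (\<lambda>\<sigma>. ennreal (f \<sigma>)) \<tau> = ennreal (step_op_real p f \<tau>)"
  using assms up_prob_bounds[OF assms(1,2), of "fst \<tau>"]
  by (simp add: step_op_def step_op_real_def ennreal_mult ennreal_plus)

lemma step_op_real_nonneg:
  assumes "0 \<le> p" "p \<le> 1" "0 \<le> f (move 1 \<tau>)" "0 \<le> f (move (-1) \<tau>)"
  shows "0 \<le> step_op_real p f \<tau>"
  using assms up_prob_bounds[OF assms(1,2), of "fst \<tau>"] unfolding step_op_real_def by simp

lemma step_op_real_le:
  assumes "0 \<le> p" "p \<le> 1" "f (move 1 \<tau>) \<le> C" "f (move (-1) \<tau>) \<le> C"
  shows "step_op_real p f \<tau> \<le> C"
proof -
  let ?u = "up_prob p (fst \<tau>)"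
  have "step_op_real p f \<tau> \<le> ?u * C + (1 - ?u) * C"
    unfolding step_op_real_def using assms up_prob_bounds[OF assms(1,2)]
    by (intro add_mono mult_left_mono) auto
  then show ?thesis by (simp add: algebra_simps)
qed

lemma step_op_real_add: "step_op_real p (\<lambda>\<sigma>. f \<sigma> + g \<sigma>) \<tau> = step_op_real p f \<tau> + step_op_real p g \<tau>"
  unfolding step_op_real_def by (simp add: algebra_simps)

lemma step_op_real_cmult: "step_op_real p (\<lambda>\<sigma>. a * f \<sigma>) \<tau> = a * step_op_real p f \<tau>"
  unfolding step_op_real_def by (simp add: algebra_simps)

lemma step_op_iter_cong_on:
  assumes "step_closed A" "\<tau> \<in> A" "\<And>\<sigma>. \<sigma> \<in> A \<Longrightarrow> f \<sigma> = g \<sigma>"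
  shows "(step_op p ^^ n) f \<tau> = (step_op p ^^ n) g \<tau>"
  using assms(2)
proof (induction n arbitrary: \<tau>)
  case (Suc n)
  show ?case
    using Suc by (simp only: funpow.simps comp_def) (rule step_op_cong_on[OF assms(1) Suc.prems])
qed (use assms(3) in simp)

lemma step_op_iter_nn_integral:
  "(step_op p ^^ n) (\<lambda>\<sigma>. \<integral>\<^sup>+z. f z \<sigma> \<partial>measure_pmf M) \<tau> = (\<integral>\<^sup>+z. (step_op p ^^ n) (f z) \<tau> \<partial>measure_pmf M)"
proof (induction n arbitrary: \<tau>)
  case (Suc n)
  have "(step_op p ^^ n) (\<lambda>\<sigma>. \<integral>\<^sup>+z. f z \<sigma> \<partial>measure_pmf M) = (\<lambda>\<sigma>. \<integral>\<^sup>+z. (step_op p ^^ n) (f z) \<sigma> \<partial>measure_pmf M)"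
    using Suc.IH by blast
  then show ?case by (simp add: step_op_nn_integral)
qed simp

lemma step_op_iter_commute:
  assumes "\<And>d \<sigma>. move d (e \<sigma>) = e (move d \<sigma>)" "\<And>\<sigma>. fst (e \<sigma>) = fst \<sigma>"
  shows "(step_op p ^^ n) (\<lambda>\<sigma>. f (e \<sigma>)) \<tau> = (step_op p ^^ n) f (e \<tau>)"
proof (induction n arbitrary: \<tau>)
  case (Suc n)
  then show ?case by (simp add: step_op_def assms)
qed simp

lemma potential_le_supersolution:
  assumes A: "step_closed A" and super: "\<And>\<sigma>. \<sigma> \<in> A \<Longrightarrow> f \<sigma> + step_op p h \<sigma> \<le> h \<sigma>"
    and "\<tau> \<in> A"
  shows "potential p f \<tau> \<le> h \<tau>"
proof -
  have "\<forall>\<tau>\<in>A. (\<Sum>n<N. (step_op p ^^ n) f \<tau>) \<le> h \<tau>" for N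
  proof (induction N)
    case (Suc N)
    show ?case
    proof
      fix \<tau> assume "\<tau> \<in> A"
      have "(\<Sum>n<Suc N. (step_op p ^^ n) f \<tau>) = f \<tau> + (\<Sum>n<N. step_op p ((step_op p ^^ n) f) \<tau>)"
        unfolding sum.lessThan_Suc_shift by simp
      also have "\<dots> = f \<tau> + step_op p (\<lambda>\<sigma>. \<Sum>n<N. (step_op p ^^ n) f \<sigma>) \<tau>"
        by (simp add: step_op_sum)
      also have "\<dots> \<le> f \<tau> + step_op p h \<tau>"
        using Suc.IH by (intro add_left_mono step_op_mono_on[OF A \<open>\<tau> \<in> A\<close>]) auto
      also have "\<dots> \<le> h \<tau>" using super \<open>\<tau> \<in> A\<close> by blast
      finally show "(\<Sum>n<Suc N. (step_op p ^^ n) f \<tau>) \<le> h \<tau>" .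
    qed
  qed simp
  then show ?thesis
    unfolding potential_def using \<open>\<tau> \<in> A\<close> by (intro suminf_le_const summableI) auto
qed

lemma subsolution_le_partial_potential:
  assumes A: "step_closed A" and sub: "\<And>\<sigma>. \<sigma> \<in> A \<Longrightarrow> h \<sigma> \<le> f \<sigma> + step_op p h \<sigma>"
  shows "\<tau> \<in> A \<Longrightarrow> h \<tau> \<le> (\<Sum>n<N. (step_op p ^^ n) f \<tau>) + (step_op p ^^ N) h \<tau>"
proof (induction N arbitrary: \<tau>)
  case (Suc N)
  have "h \<tau> \<le> f \<tau> + step_op p h \<tau>" using sub Suc.prems by blast
  also have "\<dots> \<le> f \<tau> + step_op p (\<lambda>\<sigma>. (\<Sum>n<N. (step_op p ^^ n) f \<sigma>) + (step_op p ^^ N) h \<sigma>) \<tau>"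
    using Suc.IH by (intro add_left_mono step_op_mono_on[OF A Suc.prems])
  also have "\<dots> = f \<tau> + (\<Sum>n<N. (step_op p ^^ Suc n) f \<tau>) + (step_op p ^^ Suc N) h \<tau>"
    by (simp add: step_op_add step_op_sum add.assoc)
  also have "\<dots> = (\<Sum>n<Suc N. (step_op p ^^ n) f \<tau>) + (step_op p ^^ Suc N) h \<tau>"
    unfolding sum.lessThan_Suc_shift by simp
  finally show ?case .
qed simp

lemma subsolution_le_potential:
  assumes A: "step_closed A" and sub: "\<And>\<sigma>. \<sigma> \<in> A \<Longrightarrow> h \<sigma> \<le> f \<sigma> + step_op p h \<sigma>"
    and "\<tau> \<in> A" and "potential p h \<tau> \<noteq> \<top>"
  shows "h \<tau> \<le> potential p f \<tau>"
proof -
  have finite: "(\<Sum>N. (step_op p ^^ N) h \<tau>) \<noteq> \<top>" using assms(4) by (simp add: potential_def)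
  define r where "r N = enn2real ((step_op p ^^ N) h \<tau>)" for N
  have not_top: "(step_op p ^^ N) h \<tau> \<noteq> \<top>" for N
    using finite ennreal_suminf_lessD[of "\<lambda>N. (step_op p ^^ N) h \<tau>" \<top> N]
    by (auto simp: top.not_eq_extremum)
  then have r: "(step_op p ^^ N) h \<tau> = ennreal (r N)" for N
    unfolding r_def by (simp add: ennreal_enn2real_if)
  have "summable r"
  proof (rule summable_suminf_not_top)
    show "(\<Sum>N. ennreal (r N)) \<noteq> \<top>" using finite by (simp add: r[symmetric])
  qed (simp add: r_def)
  then have "r \<longlonglongrightarrow> 0" by (rule summable_LIMSEQ_zero)
  show ?thesis
  proof (rule ennreal_le_epsilon)
    fix e :: real assume "0 < e"
    from LIMSEQ_D[OF \<open>r \<longlonglongrightarrow> 0\<close> this] obtain N where "norm (r N - 0) < e"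
      by blast
    then have "r N < e" by simp
    have "h \<tau> \<le> (\<Sum>n<N. (step_op p ^^ n) f \<tau>) + ennreal (r N)"
      using subsolution_le_partial_potential[OF A sub \<open>\<tau> \<in> A\<close>, of N] by (simp add: r)
    also have "\<dots> \<le> potential p f \<tau> + ennreal e"
      unfolding potential_def using \<open>r N < e\<close>
      by (intro add_mono sum_le_suminf summableI ennreal_leI) auto
    finally show "h \<tau> \<le> potential p f \<tau> + ennreal e" .
  qed
qed

lemma potential_le_real_supersolution:
  assumes A: "step_closed A" and p: "0 \<le> p" "p \<le> 1"
    and nonneg: "\<And>\<sigma>. \<sigma> \<in> A \<Longrightarrow> 0 \<le> f \<sigma> \<and> 0 \<le> h \<sigma>"
    and super: "\<And>\<sigma>. \<sigma> \<in> A \<Longrightarrow> f \<sigma> + step_op_real p h \<sigma> \<le> h \<sigma>" and "\<tau> \<in> A"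
  shows "potential p (\<lambda>\<sigma>. ennreal (f \<sigma>)) \<tau> \<le> ennreal (h \<tau>)"
proof (rule potential_le_supersolution[OF A _ \<open>\<tau> \<in> A\<close>])
  fix \<sigma> assume "\<sigma> \<in> A"
  then have "move 1 \<sigma> \<in> A" "move (-1) \<sigma> \<in> A" using A unfolding step_closed_def by auto
  then have "0 \<le> h (move 1 \<sigma>)" "0 \<le> h (move (-1) \<sigma>)" using nonneg by auto
  then have "step_op p (\<lambda>\<sigma>. ennreal (h \<sigma>)) \<sigma> = ennreal (step_op_real p h \<sigma>)"
    and "0 \<le> step_op_real p h \<sigma>"
    using step_op_ennreal[OF p] step_op_real_nonneg[OF p] by auto
  then show "ennreal (f \<sigma>) + step_op p (\<lambda>\<sigma>. ennreal (h \<sigma>)) \<sigma> \<le> ennreal (h \<sigma>)"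
    using nonneg[OF \<open>\<sigma> \<in> A\<close>] super[OF \<open>\<sigma> \<in> A\<close>] by (simp flip: ennreal_plus)
qed

lemma real_subsolution_le_potential:
  assumes A: "step_closed A" and p: "0 \<le> p" "p \<le> 1"
    and nonneg: "\<And>\<sigma>. \<sigma> \<in> A \<Longrightarrow> 0 \<le> f \<sigma> \<and> 0 \<le> h \<sigma>"
    and sub: "\<And>\<sigma>. \<sigma> \<in> A \<Longrightarrow> h \<sigma> \<le> f \<sigma> + step_op_real p h \<sigma>" and "\<tau> \<in> A"
    and finite: "potential p (\<lambda>\<sigma>. ennreal (h \<sigma>)) \<tau> \<noteq> \<top>"
  shows "ennreal (h \<tau>) \<le> potential p (\<lambda>\<sigma>. ennreal (f \<sigma>)) \<tau>"
proof (rule subsolution_le_potential[OF A _ \<open>\<tau> \<in> A\<close> finite])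
  fix \<sigma> assume "\<sigma> \<in> A"
  then have "move 1 \<sigma> \<in> A" "move (-1) \<sigma> \<in> A" using A unfolding step_closed_def by auto
  then have "0 \<le> h (move 1 \<sigma>)" "0 \<le> h (move (-1) \<sigma>)" using nonneg by auto
  then have "step_op p (\<lambda>\<sigma>. ennreal (h \<sigma>)) \<sigma> = ennreal (step_op_real p h \<sigma>)"
    and "0 \<le> step_op_real p h \<sigma>"
    using step_op_ennreal[OF p] step_op_real_nonneg[OF p] by auto
  then show "ennreal (h \<sigma>) \<le> ennreal (f \<sigma>) + step_op p (\<lambda>\<sigma>. ennreal (h \<sigma>)) \<sigma>"
    using nonneg[OF \<open>\<sigma> \<in> A\<close>] sub[OF \<open>\<sigma> \<in> A\<close>] by (simp flip: ennreal_plus)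
qed

definition coin_pmf :: "real \<Rightarrow> (bool \<times> bool) pmf" where
  "coin_pmf p = pair_pmf (bernoulli_pmf p) (bernoulli_pmf (1/2))"

lemma ennreal_mult_convex_comb: "0 \<le> a \<Longrightarrow> a \<le> 1 \<Longrightarrow> x * ennreal a + x * ennreal (1 - a) = x"
  by (simp add: distrib_left[symmetric] ennreal_plus[symmetric] del: ennreal_plus)

lemma step_op_eq_nn_integral:
  assumes "0 \<le> p" "p \<le> 1"
  shows "step_op p f \<tau> = (\<integral>\<^sup>+cd. f (move (incr (fst \<tau>) (fst cd) (snd cd)) \<tau>) \<partial>coin_pmf p)"
proof -
  let ?u = "f (move 1 \<tau>)" and ?d = "f (move (-1) \<tau>)"
  consider "fst \<tau> < 0" | "fst \<tau> > 0" | "fst \<tau> = 0" by linarith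
  then show ?thesis
  proof cases
    case 1
    then show ?thesis using assms
      by (simp add: coin_pmf_def nn_integral_pair_pmf' incr_def step_op_def up_prob_def
          ennreal_mult_convex_comb mult.commute)
  next
    case 2
    then show ?thesis using assms
      by (simp add: coin_pmf_def nn_integral_pair_pmf' incr_def step_op_def up_prob_def
          ennreal_mult_convex_comb mult.commute add.commute)
  next
    case 3
    have "(\<integral>\<^sup>+cd. f (move (incr (fst \<tau>) (fst cd) (snd cd)) \<tau>) \<partial>coin_pmf p)
        = ?u * ennreal (1/2) + ?d * ennreal (1/2)"
      using 3 assms unfolding coin_pmf_def nn_integral_pair_pmf'
      by (simp del: ennreal_half add: incr_def ennreal_mult_convex_comb)
    then show ?thesis using 3 by (simp add: step_op_def up_prob_def mult.commute)
  qed
qed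

section \<open>Harmonic excursion probabilities\<close>

text \<open>The probability of completing the \<open>k\<close>-th return to 0 while \<open>B\<close> holds, if each remaining
  excursion from 0 succeeds with probability \<open>a\<close> and the current one, at height \<open>y \<noteq> 0\<close>, with
  probability \<open>g y\<close>.\<close>

definition excursion_prob ::
    "nat \<Rightarrow> (range_state \<Rightarrow> bool) \<Rightarrow> real \<Rightarrow> (int \<Rightarrow> real) \<Rightarrow> range_state \<Rightarrow> real" where
  "excursion_prob k B a g \<tau> = (case \<tau> of (y, lo, hi, c) \<Rightarrow>
     if \<not> B \<tau> then 0
     else if c < k then a ^ (k - c - 1) * (if y = 0 then a else g y)
     else if c = k \<and> y = 0 then 1 else 0)"

lemma excursion_prob_start: "B (0, 0, 0, 0) \<Longrightarrow> excursion_prob k B a g (0, 0, 0, 0) = a ^ k"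
  unfolding excursion_prob_def by (cases k) auto

lemma excursion_prob_move_unfinished:
  assumes "c < k" "d = 1 \<or> d = -1" "g 0 = 1"
    and "\<not> B (move d (y, lo, hi, c)) \<Longrightarrow> g (y + d) = 0"
  shows "excursion_prob k B a g (move d (y, lo, hi, c)) = a ^ (k - c - 1) * g (y + d)"
proof (cases "B (move d (y, lo, hi, c))")
  case True
  show ?thesis
  proof (cases "y + d = 0")
    case True
    have "a ^ (k - Suc c - 1) * a = a ^ (k - c - 1)" if "Suc c < k"
      using that by (simp flip: power_Suc2 add: Suc_diff_Suc)
    then show ?thesis
      using \<open>B (move d (y, lo, hi, c))\<close> True assms(1,3)
      by (auto simp: excursion_prob_def move_def not_less_eq)
  next
    case False
    then show ?thesis
      using \<open>B (move d (y, lo, hi, c))\<close> assms(1) by (simp add: excursion_prob_def move_def)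
  qed
qed (use assms(4) in \<open>simp add: excursion_prob_def\<close>)

lemma excursion_prob_move_finished:
  assumes "k \<le> c" "d = 1 \<or> d = -1"
  shows "excursion_prob k B a g (move d (y, lo, hi, c)) = 0"
  using assms by (auto simp: excursion_prob_def move_def)

lemma excursion_prob_harmonic:
  assumes g0: "g 0 = 1" and a: "a = (g 1 + g (-1)) / 2"
    and pos: "\<And>y. 0 < y \<Longrightarrow> p * g (y - 1) + (1 - p) * g (y + 1) = g y"
    and neg: "\<And>y. y < 0 \<Longrightarrow> (1 - p) * g (y - 1) + p * g (y + 1) = g y"
    and persistent: "\<And>\<sigma> d. \<not> B \<sigma> \<Longrightarrow> \<not> B (move d \<sigma>)"
    and exit: "\<And>d. B \<tau> \<Longrightarrow> d = 1 \<or> d = -1 \<Longrightarrow> \<not> B (move d \<tau>) \<Longrightarrow> g (fst \<tau> + d) = 0"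
  shows "excursion_prob k B a g \<tau> =
    (if snd (snd (snd \<tau>)) = k \<and> fst \<tau> = 0 \<and> B \<tau> then 1 else 0) + step_op_real p (excursion_prob k B a g) \<tau>"
proof -
  obtain y lo hi c where \<tau>: "\<tau> = (y, lo, hi, c)" by (cases \<tau>) auto
  let ?f = "excursion_prob k B a g"
  consider "\<not> B \<tau>" | "B \<tau>" "k \<le> c" | "B \<tau>" "c < k" by linarith
  then show ?thesis
  proof cases
    case 1
    then have "?f (move d \<tau>) = 0" for d using persistent by (simp add: excursion_prob_def split: prod.splits)
    then show ?thesis using 1 by (simp add: step_op_real_def excursion_prob_def \<tau>)
  next
    case 2
    then show ?thesis
      by (auto simp: \<tau> step_op_real_def excursion_prob_move_finished) (auto simp: excursion_prob_def)
  next
    case 3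
    have move: "?f (move d \<tau>) = a ^ (k - c - 1) * g (y + d)" if "d = 1 \<or> d = -1" for d
      using excursion_prob_move_unfinished[where B = B and a = a and g = g and y = y and lo = lo and hi = hi,
          OF \<open>c < k\<close> that g0] exit[OF \<open>B \<tau>\<close> that] by (simp add: \<tau>)
    have "step_op_real p ?f \<tau> = a ^ (k - c - 1) * (up_prob p y * g (y + 1) + (1 - up_prob p y) * g (y - 1))"
      using move[of 1] move[of "-1"] by (simp add: step_op_real_def \<tau> algebra_simps)
    also have "up_prob p y * g (y + 1) + (1 - up_prob p y) * g (y - 1) = (if y = 0 then a else g y)"
      using pos[of y] neg[of y] by (auto simp: up_prob_def a algebra_simps add_divide_distrib)
    finally have "step_op_real p ?f \<tau> = a ^ (k - c - 1) * (if y = 0 then a else g y)" .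
    moreover have "?f \<tau> = a ^ (k - c - 1) * (if y = 0 then a else g y)"
      using 3 by (simp add: \<tau> excursion_prob_def)
    ultimately show ?thesis using 3 by (simp add: \<tau>)
  qed
qed

locale biased_walk =
  fixes p :: real
  assumes p_gt_half: "1/2 < p" and p_lt_1: "p < 1"
begin

lemma p_bounds: "0 \<le> p" "p \<le> 1"
  using p_gt_half p_lt_1 by auto

definition lam :: real where
  "lam = p / (1 - p)"

lemma lam_gt_1: "1 < lam"
  using p_gt_half p_lt_1 unfolding lam_def by (simp add: field_simps)

lemma lam_pow_gt_1: "1 < lam ^ Suc m"
  using lam_gt_1 by (intro one_less_power) auto

text \<open>Gambler's ruin: started at \<open>z \<in> [0, m + 1]\<close> and stepping towards 0 with probability \<open>p\<close>,
  the walk hits 0 before \<open>m + 1\<close> with probability \<open>ruin_prob m z\<close>.\<close>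

definition ruin_prob :: "nat \<Rightarrow> int \<Rightarrow> real" where
  "ruin_prob m z = (lam ^ (m + 1) - lam ^ nat z) / (lam ^ (m + 1) - 1)"

lemma ruin_prob_0 [simp]: "ruin_prob m 0 = 1"
  using lam_pow_gt_1[of m] unfolding ruin_prob_def by simp

lemma ruin_prob_top: "ruin_prob m (int m + 1) = 0"
  unfolding ruin_prob_def by (simp add: nat_add_distrib)

lemma ruin_prob_harmonic:
  assumes "1 \<le> z"
  shows "p * ruin_prob m (z - 1) + (1 - p) * ruin_prob m (z + 1) = ruin_prob m z"
proof -
  define L where "L = lam ^ nat (z - 1)"
  define T where "T = lam ^ (m + 1)"
  have "nat z = Suc (nat (z - 1))" "nat (z + 1) = Suc (Suc (nat (z - 1)))" using assms by auto
  then have lam_z: "lam ^ nat z = L * lam" and lam_z1: "lam ^ nat (z + 1) = L * lam\<^sup>2"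
    unfolding L_def by (simp_all add: power2_eq_square)
  have "(1 - p) * lam = p" using p_lt_1 unfolding lam_def by simp
  then have "p + (1 - p) * lam\<^sup>2 = p + p * lam" by (simp add: power2_eq_square mult.assoc[symmetric])
  also have "\<dots> = lam" using p_lt_1 unfolding lam_def by (simp add: field_simps)
  finally have "p * (T - L) + (1 - p) * (T - L * lam\<^sup>2) = T - L * lam"
    by (simp add: algebra_simps) (metis distrib_left mult.commute)
  moreover have "p * ((T - L) / (T - 1)) + (1 - p) * ((T - L * lam\<^sup>2) / (T - 1))
      = (p * (T - L) + (1 - p) * (T - L * lam\<^sup>2)) / (T - 1)"
    by (simp add: add_divide_distrib)
  ultimately show ?thesis
    unfolding ruin_prob_def lam_z lam_z1 L_def[symmetric] T_def[symmetric] by simp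
qed

lemma ruin_prob_nonneg:
  assumes "0 \<le> z" "z \<le> int m + 1"
  shows "0 \<le> ruin_prob m z"
proof -
  have "lam ^ nat z \<le> lam ^ (m + 1)"
    using assms lam_gt_1 by (intro power_increasing) auto
  then show ?thesis unfolding ruin_prob_def using lam_pow_gt_1[of m] by simp
qed

lemma ruin_prob_le_1: "ruin_prob m z \<le> 1"
  unfolding ruin_prob_def using lam_gt_1 lam_pow_gt_1[of m] one_le_power[of lam "nat z"]
  by (simp add: field_simps)

definition return_prob :: "nat \<Rightarrow> real" where
  "return_prob m = ruin_prob m 1"

lemma return_prob_eq: "return_prob m = 1 - (lam - 1) / (lam ^ (m + 1) - 1)"
  using lam_pow_gt_1[of m] unfolding return_prob_def ruin_prob_def by (simp add: field_simps)

lemma return_prob_bounds: "0 \<le> return_prob m" "return_prob m \<le> 1"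
  unfolding return_prob_def using ruin_prob_nonneg[of 1 m] ruin_prob_le_1 by auto

text \<open>An excursion from 0 stays below \<open>m + 1\<close> if it starts downwards or returns in time.\<close>

definition low_excursion_prob :: "nat \<Rightarrow> real" where
  "low_excursion_prob m = (1 + return_prob m) / 2"

lemma low_excursion_prob_bounds: "0 \<le> low_excursion_prob m" "low_excursion_prob m \<le> 1"
  unfolding low_excursion_prob_def using return_prob_bounds[of m] by auto

definition confined_prob :: "nat \<Rightarrow> nat \<Rightarrow> range_state \<Rightarrow> real" where
  "confined_prob k m = excursion_prob k (\<lambda>(y, lo, hi, c). - int m \<le> lo \<and> hi \<le> int m)
     (return_prob m) (\<lambda>y. ruin_prob m \<bar>y\<bar>)"

definition max_confined_prob :: "nat \<Rightarrow> nat \<Rightarrow> range_state \<Rightarrow> real" where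
  "max_confined_prob k m = excursion_prob k (\<lambda>(y, lo, hi, c). hi \<le> int m)
     (low_excursion_prob m) (\<lambda>y. if 0 < y then ruin_prob m y else 1)"

definition min_confined_prob :: "nat \<Rightarrow> nat \<Rightarrow> range_state \<Rightarrow> real" where
  "min_confined_prob k m = excursion_prob k (\<lambda>(y, lo, hi, c). - int m \<le> lo)
     (low_excursion_prob m) (\<lambda>y. if y < 0 then ruin_prob m (- y) else 1)"

lemma confined_prob_harmonic:
  assumes "(y, lo, hi, c) \<in> range_states"
  shows "confined_prob k m (y, lo, hi, c) = (if c = k \<and> y = 0 \<and> - int m \<le> lo \<and> hi \<le> int m then 1 else 0)
    + step_op_real p (confined_prob k m) (y, lo, hi, c)"
  unfolding confined_prob_def
proof (subst excursion_prob_harmonic)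
  show "p * ruin_prob m \<bar>z - 1\<bar> + (1 - p) * ruin_prob m \<bar>z + 1\<bar> = ruin_prob m \<bar>z\<bar>" if "0 < z" for z
    using ruin_prob_harmonic[of z m] that by simp
  show "(1 - p) * ruin_prob m \<bar>z - 1\<bar> + p * ruin_prob m \<bar>z + 1\<bar> = ruin_prob m \<bar>z\<bar>" if "z < 0" for z
  proof -
    have abs: "\<bar>z - 1\<bar> = - z + 1" "\<bar>z + 1\<bar> = - z - 1" "\<bar>z\<bar> = - z" using that by auto
    have "p * ruin_prob m (- z - 1) + (1 - p) * ruin_prob m (- z + 1) = ruin_prob m (- z)"
      using ruin_prob_harmonic[of "- z" m] that by simp
    then show ?thesis unfolding abs by (metis add.commute)
  qed
  show "ruin_prob m \<bar>fst (y, lo, hi, c) + d\<bar> = 0"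
    if "(\<lambda>(y, lo, hi, c). - int m \<le> lo \<and> hi \<le> int m) (y, lo, hi, c)"
      and "d = 1 \<or> d = -1"
      and "\<not> (\<lambda>(y, lo, hi, c). - int m \<le> lo \<and> hi \<le> int m) (move d (y, lo, hi, c))" for d
  proof -
    have "\<bar>y + d\<bar> = int m + 1" using that assms by (auto simp: move_def range_states_def)
    then show ?thesis by (simp add: ruin_prob_top)
  qed
qed (auto simp: return_prob_def move_def split: prod.splits)

lemma max_confined_prob_harmonic:
  assumes "(y, lo, hi, c) \<in> range_states"
  shows "max_confined_prob k m (y, lo, hi, c) = (if c = k \<and> y = 0 \<and> hi \<le> int m then 1 else 0)
    + step_op_real p (max_confined_prob k m) (y, lo, hi, c)"
  unfolding max_confined_prob_def
proof (subst excursion_prob_harmonic)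
  show "p * (if 0 < z - 1 then ruin_prob m (z - 1) else 1) + (1 - p) * (if 0 < z + 1 then ruin_prob m (z + 1) else 1)
      = (if 0 < z then ruin_prob m z else 1)" if "0 < z" for z
    using ruin_prob_harmonic[of z m] that by (cases "z = 1") auto
  show "(if 0 < fst (y, lo, hi, c) + d then ruin_prob m (fst (y, lo, hi, c) + d) else 1) = 0"
    if "(\<lambda>(y, lo, hi, c). hi \<le> int m) (y, lo, hi, c)" and "d = 1 \<or> d = -1"
      and "\<not> (\<lambda>(y, lo, hi, c). hi \<le> int m) (move d (y, lo, hi, c))" for d
  proof -
    have "y + d = int m + 1" using that assms by (auto simp: move_def range_states_def)
    then show ?thesis by (simp add: ruin_prob_top)
  qed
qed (auto simp: low_excursion_prob_def return_prob_def move_def ruin_prob_top split: prod.splits)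

lemma min_confined_prob_harmonic:
  assumes "(y, lo, hi, c) \<in> range_states"
  shows "min_confined_prob k m (y, lo, hi, c) = (if c = k \<and> y = 0 \<and> - int m \<le> lo then 1 else 0)
    + step_op_real p (min_confined_prob k m) (y, lo, hi, c)"
  unfolding min_confined_prob_def
proof (subst excursion_prob_harmonic)
  show "(1 - p) * (if z - 1 < 0 then ruin_prob m (- (z - 1)) else 1) + p * (if z + 1 < 0 then ruin_prob m (- (z + 1)) else 1)
      = (if z < 0 then ruin_prob m (- z) else 1)" if "z < 0" for z
  proof (cases "z = -1")
    case False
    have "p * ruin_prob m (- z - 1) + (1 - p) * ruin_prob m (- z + 1) = ruin_prob m (- z)"
      using ruin_prob_harmonic[of "- z" m] that by simp
    moreover have "- (z - 1) = - z + 1" "- (z + 1) = - z - 1" by simp_all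
    ultimately show ?thesis using that False by (simp only:) (simp add: add.commute)
  qed (use ruin_prob_harmonic[of 1 m] in simp)
  show "(if fst (y, lo, hi, c) + d < 0 then ruin_prob m (- (fst (y, lo, hi, c) + d)) else 1) = 0"
    if "(\<lambda>(y, lo, hi, c). - int m \<le> lo) (y, lo, hi, c)" and "d = 1 \<or> d = -1"
      and "\<not> (\<lambda>(y, lo, hi, c). - int m \<le> lo) (move d (y, lo, hi, c))" for d
  proof -
    have "- (y + d) = int m + 1" using that assms by (auto simp: move_def range_states_def)
    then show ?thesis by (simp add: ruin_prob_top)
  qed
qed (auto simp: low_excursion_prob_def return_prob_def move_def ruin_prob_top split: prod.splits)

definition unfinished :: "nat \<Rightarrow> range_state \<Rightarrow> real" where
  "unfinished k \<tau> = (case \<tau> of (y, lo, hi, c) \<Rightarrow> if c < k \<or> c = k \<and> y = 0 then 1 else 0)"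

lemma confined_prob_bounds:
  assumes "\<sigma> \<in> range_states"
  shows "0 \<le> confined_prob k m \<sigma> \<and> confined_prob k m \<sigma> \<le> unfinished k \<sigma>"
proof -
  obtain y lo hi c where \<sigma>: "\<sigma> = (y, lo, hi, c)" by (cases \<sigma>) auto
  have "0 \<le> ruin_prob m \<bar>y\<bar> \<and> ruin_prob m \<bar>y\<bar> \<le> 1" if "- int m \<le> lo" "hi \<le> int m"
    using that assms ruin_prob_nonneg[of "\<bar>y\<bar>" m] ruin_prob_le_1 by (auto simp: \<sigma> range_states_def)
  then show ?thesis
    using return_prob_bounds[of m]
    by (auto simp: \<sigma> confined_prob_def excursion_prob_def unfinished_def
        intro!: mult_nonneg_nonneg mult_le_one power_le_one)
qed

lemma max_confined_prob_nonneg: "\<sigma> \<in> range_states \<Longrightarrow> 0 \<le> max_confined_prob k m \<sigma>"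
  using low_excursion_prob_bounds[of m] ruin_prob_nonneg[of _ m]
  by (auto simp: max_confined_prob_def excursion_prob_def range_states_def)

lemma min_confined_prob_nonneg: "\<sigma> \<in> range_states \<Longrightarrow> 0 \<le> min_confined_prob k m \<sigma>"
  using low_excursion_prob_bounds[of m] ruin_prob_nonneg[of _ m]
  by (auto simp: min_confined_prob_def excursion_prob_def range_states_def)

definition drift :: real where
  "drift = 2 * p - 1"

text \<open>A Lyapunov function: the drift towards 0 makes it decrease by at least 1 per step before
  the \<open>k\<close>-th return, so it bounds the expected time to that return.\<close>

definition return_time_bound :: "nat \<Rightarrow> range_state \<Rightarrow> real" where
  "return_time_bound k \<tau> = (case \<tau> of (y, lo, hi, c) \<Rightarrow>
     if c < k then (1 + 1 / drift) * real (k - c) + (if y = 0 then 1 + 1 / drift else \<bar>y\<bar> / drift) else 0)"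

lemma drift_pos: "0 < drift"
  using p_gt_half unfolding drift_def by simp

lemma return_time_bound_nonneg: "0 \<le> return_time_bound k \<tau>"
  using drift_pos by (auto simp: return_time_bound_def split: prod.splits)

lemma return_time_bound_move:
  assumes "c < k" "d = 1 \<or> d = -1"
  shows "return_time_bound k (move d (y, lo, hi, c)) \<le> (1 + 1 / drift) * real (k - c) + \<bar>y + d\<bar> / drift"
proof (cases "y + d = 0 \<and> Suc c < k")
  case True
  then have "real (k - c) = real (k - Suc c) + 1" by linarith
  then have "return_time_bound k (move d (y, lo, hi, c)) = (1 + 1 / drift) * real (k - c)"
    using True by (simp add: return_time_bound_def move_def algebra_simps add_divide_distrib)
  moreover have "d = - y" using True by simp
  ultimately show ?thesis by simp
next
  case False
  then show ?thesis
    using assms drift_pos by (auto simp: return_time_bound_def move_def)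
qed

lemma drift_average: "(1 - p) * (X + (t + 1) / drift) + p * (X + (t - 1) / drift) = X + t / drift - 1"
proof -
  have "(1 - p) * (X + (t + 1) / drift) + p * (X + (t - 1) / drift)
      = X + ((1 - p) * (t + 1) + p * (t - 1)) / drift"
    using drift_pos by (simp add: field_simps)
  also have "(1 - p) * (t + 1) + p * (t - 1) = t - drift" by (simp add: drift_def algebra_simps)
  finally show ?thesis using drift_pos by (simp add: diff_divide_distrib)
qed

lemma return_time_bound_supersolution:
  "(if snd (snd (snd \<tau>)) < k then 1 else 0) + step_op_real p (return_time_bound k) \<tau> \<le> return_time_bound k \<tau>"
proof -
  obtain y lo hi c where \<tau>: "\<tau> = (y, lo, hi, c)" by (cases \<tau>) auto
  define X where "X = (1 + 1 / drift) * real (k - c)"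
  have up: "return_time_bound k (move 1 \<tau>) \<le> X + \<bar>y + 1\<bar> / drift"
    and down: "return_time_bound k (move (-1) \<tau>) \<le> X + \<bar>y - 1\<bar> / drift" if "c < k"
    using return_time_bound_move[OF that, of 1 y lo hi] return_time_bound_move[OF that, of "-1" y lo hi]
    by (simp_all add: \<tau> X_def)
  consider "k \<le> c" | "c < k" "y = 0" | "c < k" "0 < y" | "c < k" "y < 0" by linarith
  then show ?thesis
  proof cases
    case 1
    then have "return_time_bound k (move d \<tau>) = 0" for d
      by (simp add: \<tau> return_time_bound_def move_def)
    then show ?thesis using 1 by (simp add: \<tau> step_op_real_def return_time_bound_def)
  next
    case 2
    then show ?thesis
      by (simp add: \<tau> step_op_real_def return_time_bound_def move_def up_prob_def algebra_simps)
  next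
    case 3
    have "step_op_real p (return_time_bound k) \<tau> \<le> (1 - p) * (X + (\<bar>y\<bar> + 1) / drift) + p * (X + (\<bar>y\<bar> - 1) / drift)"
      unfolding step_op_real_def using 3 up down p_bounds
      by (auto simp: \<tau> up_prob_def intro!: add_mono mult_left_mono)
    then show ?thesis using 3 drift_average by (simp add: \<tau> return_time_bound_def X_def)
  next
    case 4
    have "step_op_real p (return_time_bound k) \<tau> \<le> p * (X + (\<bar>y\<bar> - 1) / drift) + (1 - p) * (X + (\<bar>y\<bar> + 1) / drift)"
      unfolding step_op_real_def using 4 up down p_bounds
      by (auto simp: \<tau> up_prob_def intro!: add_mono mult_left_mono)
    then show ?thesis using 4 drift_average[of X "\<bar>y\<bar>"] by (simp add: \<tau> return_time_bound_def X_def)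
  qed
qed

lemma potential_finite_if_le_unfinished:
  assumes f: "\<And>\<sigma>. \<sigma> \<in> range_states \<Longrightarrow> 0 \<le> f \<sigma> \<and> f \<sigma> \<le> unfinished k \<sigma>" and "\<tau> \<in> range_states"
  shows "potential p (\<lambda>\<sigma>. ennreal (f \<sigma>)) \<tau> \<noteq> \<top>"
proof -
  define W where "W = (\<lambda>\<sigma>. return_time_bound k \<sigma> + unfinished k \<sigma>)"
  have super: "f \<sigma> + step_op_real p W \<sigma> \<le> W \<sigma>" if "\<sigma> \<in> range_states" for \<sigma>
  proof -
    obtain y lo hi c where \<sigma>: "\<sigma> = (y, lo, hi, c)" by (cases \<sigma>) auto
    have linear: "step_op_real p W \<sigma> = step_op_real p (return_time_bound k) \<sigma> + step_op_real p (unfinished k) \<sigma>"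
      unfolding W_def by (rule step_op_real_add)
    have "unfinished k (move d \<sigma>) \<le> (if c < k then 1 else 0)" for d
      by (simp add: \<sigma> unfinished_def move_def)
    then have "step_op_real p (unfinished k) \<sigma> \<le> (if c < k then 1 else 0)"
      by (intro step_op_real_le[OF p_bounds])
    moreover have "(if c < k then 1 else 0) + step_op_real p (return_time_bound k) \<sigma> \<le> return_time_bound k \<sigma>"
      using return_time_bound_supersolution[of \<sigma> k] by (simp add: \<sigma>)
    moreover have "f \<sigma> \<le> unfinished k \<sigma>" using f[OF that] by simp
    ultimately show ?thesis
      using linear unfolding W_def by linarith
  qed
  have nonneg: "0 \<le> f \<sigma> \<and> 0 \<le> W \<sigma>" if "\<sigma> \<in> range_states" for \<sigma>
    using f[OF that] return_time_bound_nonneg[of k \<sigma>] by (simp add: W_def unfinished_def split: prod.splits)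
  have "potential p (\<lambda>\<sigma>. ennreal (f \<sigma>)) \<tau> \<le> ennreal (W \<tau>)"
    by (rule potential_le_real_supersolution[OF step_closed_range_states p_bounds nonneg super \<open>\<tau> \<in> range_states\<close>])
  then show ?thesis by (metis ennreal_neq_top top_unique)
qed

end

definition payoff :: "nat \<Rightarrow> real \<Rightarrow> range_state \<Rightarrow> real" where
  "payoff k q \<tau> = (case \<tau> of (y, lo, hi, c) \<Rightarrow> if c = k \<and> y = 0 then q ^ nat (hi - lo + 1) else 0)"

locale lamp_payoff = biased_walk +
  fixes k :: nat and q :: real
  assumes q_pos: "0 < q" and q_le_1: "q \<le> 1"
begin

lemma payoff_nonneg: "0 \<le> payoff k q \<tau>"
  using q_pos by (simp add: payoff_def split: prod.splits)

lemma q_pow_le_q_pow: "m \<le> n \<Longrightarrow> q ^ n \<le> q ^ m"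
  using q_pos q_le_1 by (intro power_decreasing) auto

lemma potential_payoff_lower_bound:
  "ennreal (q ^ (2 * m + 1) * return_prob m ^ k) \<le> potential p (\<lambda>\<sigma>. ennreal (payoff k q \<sigma>)) (0, 0, 0, 0)"
proof -
  define h where "h = (\<lambda>\<sigma>. q ^ (2 * m + 1) * confined_prob k m \<sigma>)"
  have bounds: "0 \<le> h \<sigma> \<and> h \<sigma> \<le> unfinished k \<sigma>" if "\<sigma> \<in> range_states" for \<sigma>
  proof -
    have "q ^ (2 * m + 1) * confined_prob k m \<sigma> \<le> 1 * unfinished k \<sigma>"
      using confined_prob_bounds[OF that] q_pos q_le_1 by (intro mult_mono power_le_one) auto
    then show ?thesis using confined_prob_bounds[OF that] q_pos by (simp add: h_def)
  qed
  have sub: "h \<sigma> \<le> payoff k q \<sigma> + step_op_real p h \<sigma>" if "\<sigma> \<in> range_states" for \<sigma>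
  proof -
    obtain y lo hi c where \<sigma>: "\<sigma> = (y, lo, hi, c)" by (cases \<sigma>) auto
    have "q ^ (2 * m + 1) * (if c = k \<and> y = 0 \<and> - int m \<le> lo \<and> hi \<le> int m then 1 else 0) \<le> payoff k q \<sigma>"
      using that q_pow_le_q_pow[of "nat (hi - lo + 1)" "2 * m + 1"] q_pos
      by (auto simp: \<sigma> payoff_def range_states_def)
    then show ?thesis
      using confined_prob_harmonic[of y lo hi c k m] that
      by (simp add: \<sigma> h_def step_op_real_cmult distrib_left)
  qed
  have "ennreal (h (0, 0, 0, 0)) \<le> potential p (\<lambda>\<sigma>. ennreal (payoff k q \<sigma>)) (0, 0, 0, 0)"
    using bounds payoff_nonneg
    by (intro real_subsolution_le_potential[OF step_closed_range_states p_bounds _ sub]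
        potential_finite_if_le_unfinished) (auto simp: range_states_def)
  then show ?thesis
    by (simp add: h_def confined_prob_def excursion_prob_start return_prob_def)
qed

lemma payoff_le_sum:
  assumes "(y, lo, hi, c) \<in> range_states"
  shows "ennreal (payoff k q (y, lo, hi, c)) \<le> (\<Sum>m. ennreal (q ^ (2 * m + 1) *
    ((if c = k \<and> y = 0 \<and> hi \<le> int m then 1 else 0) + (if c = k \<and> y = 0 \<and> - int m \<le> lo then 1 else 0))))"
    (is "_ \<le> (\<Sum>m. ennreal (?t m))")
proof -
  define m0 where "m0 = nat (min hi (- lo))"
  have "payoff k q (y, lo, hi, c) \<le> ?t m0"
  proof (cases "c = k \<and> y = 0")
    case True
    have "q ^ nat (hi - lo + 1) \<le> q ^ (2 * m0 + 1)"
      using assms by (intro q_pow_le_q_pow) (auto simp: m0_def range_states_def)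
    also have "\<dots> \<le> ?t m0"
      using True assms q_pos by (auto simp: m0_def range_states_def)
    finally show ?thesis using True by (simp add: payoff_def)
  next
    case False
    then have "payoff k q (y, lo, hi, c) = 0" by (auto simp: payoff_def)
    moreover have "0 \<le> ?t m0" using q_pos by simp
    ultimately show ?thesis by simp
  qed
  then have "ennreal (payoff k q (y, lo, hi, c)) \<le> ennreal (?t m0)" by (rule ennreal_leI)
  also have "\<dots> \<le> (\<Sum>m. ennreal (?t m))"
    using sum_le_suminf[OF summableI, of "{m0}" "\<lambda>m. ennreal (?t m)"] by simp
  finally show ?thesis .
qed

definition majorant_term :: "nat \<Rightarrow> range_state \<Rightarrow> real" where
  "majorant_term m \<sigma> = q ^ (2 * m + 1) * (max_confined_prob k m \<sigma> + min_confined_prob k m \<sigma>)"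

definition payoff_majorant :: "range_state \<Rightarrow> ennreal" where
  "payoff_majorant \<tau> = (\<Sum>m. ennreal (majorant_term m \<tau>))"

lemma majorant_term_nonneg: "\<sigma> \<in> range_states \<Longrightarrow> 0 \<le> majorant_term m \<sigma>"
  using q_pos max_confined_prob_nonneg min_confined_prob_nonneg by (simp add: majorant_term_def)

lemma majorant_term_harmonic:
  assumes "(y, lo, hi, c) \<in> range_states"
  shows "q ^ (2 * m + 1) *
      ((if c = k \<and> y = 0 \<and> hi \<le> int m then 1 else 0) + (if c = k \<and> y = 0 \<and> - int m \<le> lo then 1 else 0))
    + step_op_real p (majorant_term m) (y, lo, hi, c) = majorant_term m (y, lo, hi, c)"
proof -
  have "step_op_real p (majorant_term m) (y, lo, hi, c) = q ^ (2 * m + 1) *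
      (step_op_real p (max_confined_prob k m) (y, lo, hi, c) + step_op_real p (min_confined_prob k m) (y, lo, hi, c))"
    unfolding majorant_term_def[abs_def] by (simp only: step_op_real_cmult step_op_real_add)
  then show ?thesis
    using max_confined_prob_harmonic[OF assms, of k m] min_confined_prob_harmonic[OF assms, of k m]
    by (simp add: majorant_term_def algebra_simps)
qed

lemma payoff_majorant_supersolution:
  assumes "\<tau> \<in> range_states"
  shows "ennreal (payoff k q \<tau>) + step_op p payoff_majorant \<tau> \<le> payoff_majorant \<tau>"
proof -
  obtain y lo hi c where \<tau>: "\<tau> = (y, lo, hi, c)" by (cases \<tau>) auto
  define T where "T m = q ^ (2 * m + 1) *
    ((if c = k \<and> y = 0 \<and> hi \<le> int m then 1 else 0) + (if c = k \<and> y = 0 \<and> - int m \<le> lo then 1 else 0))" for m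
  have succ: "move 1 \<tau> \<in> range_states" "move (-1) \<tau> \<in> range_states"
    using step_closed_range_states assms unfolding step_closed_def by auto
  have step_nonneg: "0 \<le> step_op_real p (majorant_term m) \<tau>" for m
    using step_op_real_nonneg[OF p_bounds majorant_term_nonneg[OF succ(1)] majorant_term_nonneg[OF succ(2)]] .
  have "step_op p payoff_majorant \<tau> = (\<Sum>m. ennreal (step_op_real p (majorant_term m) \<tau>))"
    unfolding payoff_majorant_def step_op_suminf using succ majorant_term_nonneg
    by (intro suminf_cong step_op_ennreal[OF p_bounds]) auto
  moreover have "ennreal (payoff k q \<tau>) \<le> (\<Sum>m. ennreal (T m))"
    using payoff_le_sum assms by (simp add: \<tau> T_def)
  ultimately have "ennreal (payoff k q \<tau>) + step_op p payoff_majorant \<tau>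
      \<le> (\<Sum>m. ennreal (T m)) + (\<Sum>m. ennreal (step_op_real p (majorant_term m) \<tau>))"
    by (simp add: add_right_mono)
  also have "\<dots> = (\<Sum>m. ennreal (T m) + ennreal (step_op_real p (majorant_term m) \<tau>))"
    by (simp add: suminf_add[OF summableI summableI])
  also have "\<dots> = payoff_majorant \<tau>"
    unfolding payoff_majorant_def using majorant_term_harmonic assms q_pos step_nonneg
    by (simp add: \<tau> T_def flip: ennreal_plus)
  finally show ?thesis .
qed

lemma potential_payoff_upper_bound:
  "potential p (\<lambda>\<sigma>. ennreal (payoff k q \<sigma>)) (0, 0, 0, 0) \<le> (\<Sum>m. ennreal (2 * q ^ (2 * m + 1) * low_excursion_prob m ^ k))"
proof -
  have "potential p (\<lambda>\<sigma>. ennreal (payoff k q \<sigma>)) (0, 0, 0, 0) \<le> payoff_majorant (0, 0, 0, 0)"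
    by (rule potential_le_supersolution[OF step_closed_range_states payoff_majorant_supersolution])
      (auto simp: range_states_def)
  also have "\<dots> = (\<Sum>m. ennreal (2 * q ^ (2 * m + 1) * low_excursion_prob m ^ k))"
    by (simp add: payoff_majorant_def majorant_term_def max_confined_prob_def min_confined_prob_def
        excursion_prob_start mult_ac)
  finally show ?thesis .
qed

end

section \<open>Asymptotics of the bounds\<close>

lemma powr_ln_div_commute:
  fixes a b c :: real
  assumes "0 < a" "0 < b"
  shows "a powr (ln b / c) = b powr (ln a / c)"
proof -
  have "ln b / c * ln a = ln a / c * ln b" by (simp add: field_simps)
  then show ?thesis using assms by (auto simp: powr_def)
qed

lemma summable_power_double_exp:
  fixes C b L :: real
  assumes L: "1 < L" and b: "0 < b" and C: "0 < C"
  shows "summable (\<lambda>j. C ^ j * exp (- b * L ^ j))"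
proof (rule summable_ratio_test[of "1/2" "nat \<lceil>ln (2 * C) / (b * (L - 1)\<^sup>2)\<rceil>"])
  fix n assume n: "nat \<lceil>ln (2 * C) / (b * (L - 1)\<^sup>2)\<rceil> \<le> n"
  have "real n * (L - 1) \<le> L ^ n"
    using Bernoulli_inequality[of "L - 1" n] L by simp
  then have "b * (L - 1) * (real n * (L - 1)) \<le> b * (L - 1) * L ^ n"
    using b L by (intro mult_left_mono) auto
  moreover have "ln (2 * C) / (b * (L - 1)\<^sup>2) \<le> real n" using n by linarith
  then have "ln (2 * C) \<le> b * (L - 1)\<^sup>2 * real n" using b L by (simp add: field_simps)
  ultimately have "ln (2 * C) \<le> b * (L - 1) * L ^ n" by (simp add: power2_eq_square mult_ac)
  then have "C * exp (- (b * (L - 1) * L ^ n)) \<le> C * exp (- ln (2 * C))"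
    using C by (intro mult_left_mono) auto
  also have "\<dots> = 1/2" using C by (simp add: exp_minus)
  finally have ratio: "C * exp (- (b * (L - 1) * L ^ n)) \<le> 1/2" .
  have "C ^ Suc n * exp (- b * L ^ Suc n) = (C ^ n * exp (- b * L ^ n)) * (C * exp (- (b * (L - 1) * L ^ n)))"
    by (simp add: algebra_simps flip: exp_add)
  also have "\<dots> \<le> (C ^ n * exp (- b * L ^ n)) * (1/2)"
    using ratio C by (intro mult_left_mono) auto
  finally show "norm (C ^ Suc n * exp (- b * L ^ Suc n)) \<le> 1/2 * norm (C ^ n * exp (- b * L ^ n))"
    using C by simp
qed simp

context biased_walk
begin

lemma lam_powr_log: "0 < x \<Longrightarrow> lam powr (ln x / ln lam) = x"
  using lam_gt_1 by (simp add: powr_def)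

lemma return_prob_pow_ge:
  assumes k: "2 \<le> k" and m: "real k \<le> lam ^ m"
  shows "exp (-2) \<le> return_prob m ^ k"
proof -
  define t where "t = (lam - 1) / (lam ^ (m + 1) - 1)"
  have t_nonneg: "0 \<le> t" unfolding t_def using lam_gt_1 lam_pow_gt_1[of m] by simp
  have "(lam - 1) * lam ^ m \<le> lam ^ (m + 1) - 1"
    using one_le_power[of lam m] lam_gt_1 by (simp add: algebra_simps)
  then have "t \<le> 1 / lam ^ m"
    unfolding t_def using lam_pow_gt_1[of m] lam_gt_1 by (simp add: field_simps)
  also have "\<dots> \<le> 1 / real k" using m k by (simp add: frac_le)
  finally have kt: "real k * t \<le> 1" using k by (simp add: field_simps)
  have "2 * t \<le> real k * t" using k t_nonneg by (intro mult_right_mono) auto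
  then have t_half: "t \<le> 1/2" using kt by linarith
  have "- t - 2 * t\<^sup>2 \<le> ln (1 - t)" by (rule ln_one_minus_pos_lower_bound[OF t_nonneg t_half])
  then have "real k * (- t - 2 * t\<^sup>2) \<le> real k * ln (1 - t)" by (intro mult_left_mono) auto
  moreover have "real k * (- t - 2 * t\<^sup>2) = - (real k * t) - 2 * (real k * t\<^sup>2)"
    by (simp add: algebra_simps)
  moreover have "real k * t\<^sup>2 = (real k * t) * t" by (simp add: power2_eq_square)
  moreover have "\<dots> \<le> 1 * (1/2)" using kt t_half t_nonneg by (intro mult_mono) auto
  ultimately have "-2 \<le> real k * ln (1 - t)" using kt by linarith
  then have "exp (-2) \<le> exp (real k * ln (1 - t))" by simp
  also have "\<dots> = (1 - t) ^ k" using t_half by (simp add: exp_of_nat_mult)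
  finally show ?thesis by (simp add: return_prob_eq t_def)
qed

lemma lower_bound_term:
  assumes F: "1 \<le> F" and k: "2 \<le> k"
  shows "\<exists>m. exp (-2) / F ^ 5 / real k powr (2 * (ln F / ln lam)) \<le> (1 / F) ^ (2 * m + 1) * return_prob m ^ k"
proof -
  define s where "s = ln (real k) / ln lam"
  have s: "0 \<le> s" unfolding s_def using k lam_gt_1 by simp
  define m where "m = nat \<lceil>s\<rceil> + 1"
  have m: "s \<le> real m" "real m \<le> s + 2" unfolding m_def using s by linarith+
  have "real k = lam powr s" unfolding s_def using k by (simp add: lam_powr_log)
  also have "\<dots> \<le> lam powr real m" using m lam_gt_1 by (intro powr_mono) auto
  also have "\<dots> = lam ^ m" using lam_gt_1 by (simp add: powr_realpow)
  finally have "exp (-2) \<le> return_prob m ^ k" by (rule return_prob_pow_ge[OF k])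
  have "F ^ (2 * m + 1) = F powr real (2 * m + 1)" using F by (intro powr_realpow[symmetric]) simp
  also have "\<dots> \<le> F powr (2 * s + 5)" using m F by (intro powr_mono) auto
  also have "\<dots> = F powr (2 * s) * F powr 5" by (rule powr_add)
  also have "F powr 5 = F ^ 5" using F by simp
  also have "F powr (2 * s) = (F powr s) powr 2" by (simp add: powr_powr mult.commute)
  also have "F powr s = real k powr (ln F / ln lam)"
    unfolding s_def using F k by (intro powr_ln_div_commute) auto
  also have "(real k powr (ln F / ln lam)) powr 2 = real k powr (2 * (ln F / ln lam))"
    by (simp add: powr_powr mult.commute)
  finally have "F ^ (2 * m + 1) \<le> real k powr (2 * (ln F / ln lam)) * F ^ 5" .
  then have "exp (-2) / (real k powr (2 * (ln F / ln lam)) * F ^ 5) \<le> exp (-2) / F ^ (2 * m + 1)"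
    using F k by (intro divide_left_mono) auto
  then have "exp (-2) / F ^ 5 / real k powr (2 * (ln F / ln lam)) \<le> exp (-2) / F ^ (2 * m + 1)"
    by (simp add: mult.commute)
  also have "\<dots> \<le> (1 / F) ^ (2 * m + 1) * return_prob m ^ k"
    using \<open>exp (-2) \<le> return_prob m ^ k\<close> F by (simp add: power_one_over divide_right_mono)
  finally show ?thesis by blast
qed

definition escape_rate :: real where
  "escape_rate = (lam - 1) / lam / 2"

lemma escape_rate_pos: "0 < escape_rate"
  using lam_gt_1 unfolding escape_rate_def by simp

lemma low_excursion_prob_pow_le: "low_excursion_prob m ^ k \<le> exp (- escape_rate * (real k / lam ^ m))"
proof -
  define t where "t = (lam - 1) / (lam ^ (m + 1) - 1)"
  have low: "low_excursion_prob m = 1 - t / 2"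
    unfolding low_excursion_prob_def return_prob_eq t_def using lam_pow_gt_1[of m] by (simp add: field_simps)
  have "escape_rate / lam ^ m = (lam - 1) / lam ^ (m + 1) / 2"
    unfolding escape_rate_def by (simp add: field_simps)
  also have "\<dots> \<le> t / 2"
    unfolding t_def using lam_pow_gt_1[of m] lam_gt_1 by (intro divide_right_mono divide_left_mono) auto
  finally have "real k * (escape_rate / lam ^ m) \<le> real k * (t / 2)" by (intro mult_left_mono) auto
  then have rate: "escape_rate * (real k / lam ^ m) \<le> real k * t / 2" by (simp add: field_simps)
  have "low_excursion_prob m ^ k \<le> exp (- t / 2) ^ k"
    unfolding low using low_excursion_prob_bounds[of m] exp_ge_add_one_self[of "- t / 2"]
    by (intro power_mono) (auto simp: low)
  also have "\<dots> = exp (- (real k * t / 2))" by (simp add: exp_of_nat_mult[symmetric])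
  also have "\<dots> \<le> exp (- escape_rate * (real k / lam ^ m))" using rate by simp
  finally show ?thesis .
qed

lemma inverse_square_lt_1: "1 < F \<Longrightarrow> (1 / F)\<^sup>2 < (1::real)"
  by (simp add: power_one_over divide_less_eq_1 one_less_power)

lemma upper_series_summable:
  assumes "1 < F"
  shows "summable (\<lambda>m. 2 * (1 / F) ^ (2 * m + 1) * low_excursion_prob m ^ k)"
proof (rule summable_comparison_test'[of "\<lambda>m. 2 * (1 / F) ^ (2 * m + 1)" 0])
  have "(\<lambda>m. 2 * (1 / F) ^ (2 * m + 1)) = (\<lambda>m. 2 * (1 / F) * ((1 / F)\<^sup>2) ^ m)"
    by (simp add: power_mult)
  then show "summable (\<lambda>m. 2 * (1 / F) ^ (2 * m + 1))"
    using inverse_square_lt_1[OF assms] by (simp add: summable_geometric)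
  fix m
  have "0 \<le> low_excursion_prob m ^ k" "low_excursion_prob m ^ k \<le> 1"
    using low_excursion_prob_bounds[of m] by (auto intro: power_le_one)
  then have "2 * (1 / F) ^ (2 * m + 1) * low_excursion_prob m ^ k \<le> 2 * (1 / F) ^ (2 * m + 1)"
    and "0 \<le> 2 * (1 / F) ^ (2 * m + 1) * low_excursion_prob m ^ k"
    using assms by (auto intro!: mult_left_le simp del: power_Suc)
  then show "norm (2 * (1 / F) ^ (2 * m + 1) * low_excursion_prob m ^ k) \<le> 2 * (1 / F) ^ (2 * m + 1)"
    by (simp only: real_norm_def abs_of_nonneg)
qed

lemma upper_series_head:
  assumes F: "1 < F" and m0: "lam ^ m0 \<le> real k" and "m \<le> m0"
  shows "2 * (1 / F) ^ (2 * m + 1) * low_excursion_prob m ^ k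
    \<le> 2 * (1 / F) ^ (2 * m0 + 1) * ((F\<^sup>2) ^ (m0 - m) * exp (- escape_rate * lam ^ (m0 - m)))"
proof -
  have "lam ^ (m0 - m) * lam ^ m = lam ^ m0" using \<open>m \<le> m0\<close> by (simp flip: power_add)
  then have "lam ^ (m0 - m) \<le> real k / lam ^ m" using m0 lam_gt_1 by (simp add: field_simps)
  then have "escape_rate * lam ^ (m0 - m) \<le> escape_rate * (real k / lam ^ m)"
    using escape_rate_pos by (intro mult_left_mono) auto
  then have "exp (- escape_rate * (real k / lam ^ m)) \<le> exp (- escape_rate * lam ^ (m0 - m))" by simp
  with low_excursion_prob_pow_le[of m k]
  have low: "low_excursion_prob m ^ k \<le> exp (- escape_rate * lam ^ (m0 - m))" by (rule order_trans)
  have "2 * m0 + 1 = (2 * m + 1) + 2 * (m0 - m)" using \<open>m \<le> m0\<close> by simp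
  then have "(1 / F) ^ (2 * m0 + 1) = (1 / F) ^ (2 * m + 1) * ((1 / F)\<^sup>2) ^ (m0 - m)"
    by (simp only: power_add power_mult)
  then have split: "2 * (1 / F) ^ (2 * m + 1) = 2 * (1 / F) ^ (2 * m0 + 1) * (F\<^sup>2) ^ (m0 - m)"
    using F by (simp add: power_one_over field_simps)
  have "2 * (1 / F) ^ (2 * m0 + 1) * (F\<^sup>2) ^ (m0 - m) * low_excursion_prob m ^ k
      \<le> 2 * (1 / F) ^ (2 * m0 + 1) * (F\<^sup>2) ^ (m0 - m) * exp (- escape_rate * lam ^ (m0 - m))"
    by (rule mult_left_mono[OF low]) (use F in simp)
  then show ?thesis unfolding split by (simp only: mult.assoc)
qed

lemma upper_series_tail:
  assumes "1 < F"
  shows "2 * (1 / F) ^ (2 * (j + Suc m0) + 1) * low_excursion_prob (j + Suc m0) ^ k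
    \<le> 2 * (1 / F) ^ (2 * m0 + 1) * ((1 / F)\<^sup>2) ^ (j + 1)"
proof -
  have "low_excursion_prob (j + Suc m0) ^ k \<le> 1"
    using low_excursion_prob_bounds by (auto intro: power_le_one)
  then have "2 * ((1 / F) ^ (2 * m0 + 1) * ((1 / F)\<^sup>2) ^ (j + 1)) * low_excursion_prob (j + Suc m0) ^ k
      \<le> 2 * ((1 / F) ^ (2 * m0 + 1) * ((1 / F)\<^sup>2) ^ (j + 1))"
    by (rule mult_left_le) (use assms in simp)
  moreover have "2 * (j + Suc m0) + 1 = (2 * m0 + 1) + 2 * (j + 1)" by simp
  then have "(1 / F) ^ (2 * (j + Suc m0) + 1) = (1 / F) ^ (2 * m0 + 1) * ((1 / F)\<^sup>2) ^ (j + 1)"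
    by (simp only: power_add power_mult)
  ultimately show ?thesis by (simp add: mult.assoc)
qed

lemma upper_series_head_sum:
  assumes F: "1 < F" and m0: "lam ^ m0 \<le> real k"
  shows "(\<Sum>i<Suc m0. 2 * (1 / F) ^ (2 * i + 1) * low_excursion_prob i ^ k)
    \<le> 2 * (1 / F) ^ (2 * m0 + 1) * (\<Sum>j. (F\<^sup>2) ^ j * exp (- escape_rate * lam ^ j))"
proof -
  define g where "g j = (F\<^sup>2) ^ j * exp (- escape_rate * lam ^ j)" for j
  define c where "c = 2 * (1 / F) ^ (2 * m0 + 1)"
  have "(\<Sum>i<Suc m0. 2 * (1 / F) ^ (2 * i + 1) * low_excursion_prob i ^ k) \<le> (\<Sum>i<Suc m0. c * g (m0 - i))"
    unfolding c_def g_def by (intro sum_mono upper_series_head[OF F m0]) auto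
  also have "\<dots> = c * (\<Sum>i<Suc m0. g (m0 - i))" by (simp only: sum_distrib_left)
  also have "(\<Sum>i<Suc m0. g (m0 - i)) = (\<Sum>i<Suc m0. g i)"
    using sum.nat_diff_reindex[of g "Suc m0"] by (simp only: diff_Suc_Suc)
  also have "c * (\<Sum>i<Suc m0. g i) \<le> c * (\<Sum>j. g j)"
    using F summable_power_double_exp[OF lam_gt_1 escape_rate_pos, of "F\<^sup>2"]
    by (intro mult_left_mono sum_le_suminf) (auto simp: g_def c_def)
  finally show ?thesis by (simp add: c_def g_def)
qed

lemma upper_series_tail_sum:
  assumes F: "1 < F"
  shows "(\<Sum>j. 2 * (1 / F) ^ (2 * (j + Suc m0) + 1) * low_excursion_prob (j + Suc m0) ^ k)
    \<le> 2 * (1 / F) ^ (2 * m0 + 1) * (1 / (F\<^sup>2 - 1))"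
proof -
  define c where "c = 2 * (1 / F) ^ (2 * m0 + 1)"
  have r: "0 < (1 / F)\<^sup>2" "(1 / F)\<^sup>2 < 1" using F inverse_square_lt_1 by auto
  have "(\<Sum>j. 2 * (1 / F) ^ (2 * (j + Suc m0) + 1) * low_excursion_prob (j + Suc m0) ^ k)
      \<le> (\<Sum>j. c * ((1 / F)\<^sup>2) ^ (j + 1))"
  proof (rule suminf_le)
    show "2 * (1 / F) ^ (2 * (j + Suc m0) + 1) * low_excursion_prob (j + Suc m0) ^ k \<le> c * ((1 / F)\<^sup>2) ^ (j + 1)"
      for j unfolding c_def by (rule upper_series_tail[OF F])
    show "summable (\<lambda>j. 2 * (1 / F) ^ (2 * (j + Suc m0) + 1) * low_excursion_prob (j + Suc m0) ^ k)"
      using upper_series_summable[OF F, of k]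
        summable_iff_shift[where f = "\<lambda>m. 2 * (1 / F) ^ (2 * m + 1) * low_excursion_prob m ^ k" and k = "Suc m0"]
      by simp
    have "summable (\<lambda>j. c * ((1 / F)\<^sup>2) ^ j)" using r by (intro summable_mult summable_geometric) auto
    then show "summable (\<lambda>j. c * ((1 / F)\<^sup>2) ^ (j + 1))" by (subst summable_iff_shift)
  qed
  also have "\<dots> = c * (1 / F)\<^sup>2 * (\<Sum>j. ((1 / F)\<^sup>2) ^ j)"
    by (subst suminf_mult[symmetric]) (use r in \<open>auto simp: mult_ac intro: summable_geometric\<close>)
  also have "\<dots> = c * ((1 / F)\<^sup>2 / (1 - (1 / F)\<^sup>2))" using r by (simp add: suminf_geometric)
  also have "(1 / F)\<^sup>2 / (1 - (1 / F)\<^sup>2) = 1 / (F\<^sup>2 - 1)" using F by (simp add: power_one_over field_simps)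
  finally show ?thesis by (simp add: c_def)
qed

lemma floor_log_bounds:
  assumes F: "1 < F" and k: "1 \<le> k"
  defines "m0 \<equiv> nat \<lfloor>ln (real k) / ln lam\<rfloor>"
  shows "lam ^ m0 \<le> real k" and "2 * (1 / F) ^ (2 * m0 + 1) \<le> 2 * F / real k powr (2 * (ln F / ln lam))"
proof -
  define s where "s = ln (real k) / ln lam"
  have s: "0 \<le> s" unfolding s_def using k lam_gt_1 by simp
  have m0: "real m0 \<le> s" "s < real m0 + 1" unfolding m0_def s_def[symmetric] using s by linarith+
  have "lam ^ m0 = lam powr real m0" using lam_gt_1 by (simp add: powr_realpow)
  also have "\<dots> \<le> lam powr s" using m0 lam_gt_1 by (intro powr_mono) auto
  also have "\<dots> = real k" unfolding s_def using k by (simp add: lam_powr_log)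
  finally show "lam ^ m0 \<le> real k" .
  have "real k powr (2 * (ln F / ln lam)) = (real k powr (ln F / ln lam)) powr 2"
    by (simp add: powr_powr mult.commute)
  also have "real k powr (ln F / ln lam) = F powr s"
    unfolding s_def using F k by (intro powr_ln_div_commute) auto
  also have "(F powr s) powr 2 = F powr (2 * s)" by (simp add: powr_powr mult.commute)
  also have "\<dots> \<le> F powr (real (2 * m0) + 2)" using F m0 by (intro powr_mono) auto
  also have "\<dots> = F powr real (2 * m0) * F powr 2" by (rule powr_add)
  also have "F powr real (2 * m0) = F ^ (2 * m0)" using F by (intro powr_realpow) simp
  also have "F powr 2 = F\<^sup>2" using F by simp
  finally show "2 * (1 / F) ^ (2 * m0 + 1) \<le> 2 * F / real k powr (2 * (ln F / ln lam))"
    using F k by (simp add: power_one_over field_simps power2_eq_square)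
qed

definition upper_const :: "real \<Rightarrow> real" where
  "upper_const F = 2 * F * ((\<Sum>j. (F\<^sup>2) ^ j * exp (- escape_rate * lam ^ j)) + 1 / (F\<^sup>2 - 1))"

lemma upper_series_le:
  assumes F: "1 < F" and k: "1 \<le> k"
  shows "(\<Sum>m. 2 * (1 / F) ^ (2 * m + 1) * low_excursion_prob m ^ k) \<le> upper_const F / real k powr (2 * (ln F / ln lam))"
proof -
  define T where "T = (\<lambda>m. 2 * (1 / F) ^ (2 * m + 1) * low_excursion_prob m ^ k)"
  define S where "S = (\<Sum>j. (F\<^sup>2) ^ j * exp (- escape_rate * lam ^ j))"
  define m0 where "m0 = nat \<lfloor>ln (real k) / ln lam\<rfloor>"
  have "suminf T = (\<Sum>j. T (j + Suc m0)) + (\<Sum>i<Suc m0. T i)"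
    unfolding T_def using upper_series_summable[OF F] by (rule suminf_split_initial_segment)
  also have "\<dots> \<le> 2 * (1 / F) ^ (2 * m0 + 1) * (S + 1 / (F\<^sup>2 - 1))"
    using upper_series_tail_sum[OF F, of m0 k] upper_series_head_sum[OF F floor_log_bounds(1)[OF F k]]
    unfolding T_def S_def m0_def by (simp add: distrib_left)
  also have "\<dots> \<le> 2 * F / real k powr (2 * (ln F / ln lam)) * (S + 1 / (F\<^sup>2 - 1))"
    using floor_log_bounds(2)[OF F k] F summable_power_double_exp[OF lam_gt_1 escape_rate_pos, of "F\<^sup>2"]
    unfolding m0_def S_def by (intro mult_right_mono add_nonneg_nonneg suminf_nonneg) auto
  finally show ?thesis unfolding T_def S_def upper_const_def by simp
qed

end

section \<open>Reduction of the lamplighter walk to the range chain\<close>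

definition lamp_coin_pmf :: "real \<Rightarrow> (bool \<times> bool) pmf" where
  "lamp_coin_pmf q = pair_pmf (bernoulli_pmf q) (bernoulli_pmf q)"

lemma map_pmf_of_set_eq_bernoulli:
  assumes "finite S" "a \<in> S"
  shows "map_pmf (\<lambda>x. x = a) (pmf_of_set S) = bernoulli_pmf (1 / real (card S))"
proof (rule pmf_eqI)
  have S: "S \<noteq> {}" "0 < card S" using assms card_gt_0_iff by blast+
  have "S \<inter> {a} = {a}" "S \<inter> {x. x \<noteq> a} = S - {a}" using assms by auto
  then have True: "measure (measure_pmf (pmf_of_set S)) {a} = 1 / real (card S)"
    and False: "measure (measure_pmf (pmf_of_set S)) {x. x \<noteq> a} = 1 - 1 / real (card S)"
    using assms S by (simp_all add: measure_pmf_of_set card_Diff_singleton of_nat_diff field_simps)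
  fix b :: bool
  show "pmf (map_pmf (\<lambda>x. x = a) (pmf_of_set S)) b = pmf (bernoulli_pmf (1 / real (card S))) b"
    using True False S by (cases b) (simp_all add: pmf_map vimage_def)
qed

type_synonym step_bits = "(bool \<times> bool) \<times> bool \<times> bool"

definition lamp_view :: "('a, 'b) monoid_scheme \<Rightarrow> bool \<times> bool \<times> 'a \<times> 'a \<Rightarrow> step_bits" where
  "lamp_view G x = (case x of (C, D, U, V) \<Rightarrow> ((C, D), U = \<one>\<^bsub>G\<^esub>, V = \<one>\<^bsub>G\<^esub>))"

lemma map_step_pmf_lamp_view:
  assumes "finite (carrier G)" "\<one>\<^bsub>G\<^esub> \<in> carrier G"
  shows "map_pmf (lamp_view G) (step_pmf p G)
    = pair_pmf (coin_pmf p) (lamp_coin_pmf (1 / real (card (carrier G))))"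
proof -
  let ?U = "pmf_of_set (carrier G)" and ?is_one = "\<lambda>x. x = \<one>\<^bsub>G\<^esub>"
  have "pair_pmf (coin_pmf p) (lamp_coin_pmf (1 / real (card (carrier G))))
      = pair_pmf (coin_pmf p) (map_pmf (\<lambda>(u, v). (?is_one u, ?is_one v)) (pair_pmf ?U ?U))"
    unfolding lamp_coin_pmf_def map_pair map_pmf_of_set_eq_bernoulli[OF assms] ..
  also have "\<dots> = map_pmf (lamp_view G) (step_pmf p G)"
    unfolding pair_map_pmf2 coin_pmf_def pair_pair_pmf step_pmf_def map_pmf_comp
    by (intro map_pmf_cong) (auto simp: lamp_view_def)
  finally show ?thesis ..
qed

text \<open>The lamp chain only records which lamps show the identity: its state is the position, the
  set of identity lamps and the number of returns to 0.\<close>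

type_synonym lamp_state = "int \<times> (int \<Rightarrow> bool) \<times> nat"

definition lamp_step :: "lamp_state \<Rightarrow> step_bits \<Rightarrow> lamp_state" where
  "lamp_step \<sigma> e = (case \<sigma> of (x, B, c) \<Rightarrow> case e of ((C, D), u, v) \<Rightarrow>
     (x + incr x C D, B(x := u, x + incr x C D := v), if x + incr x C D = 0 then Suc c else c))"

fun lamp_traj :: "('a, 'b) monoid_scheme \<Rightarrow> lamp_state \<Rightarrow> (bool \<times> bool \<times> 'a \<times> 'a) stream \<Rightarrow> nat \<Rightarrow> lamp_state" where
  "lamp_traj G \<sigma> \<omega> 0 = \<sigma>"
| "lamp_traj G \<sigma> \<omega> (Suc n) = lamp_traj G (lamp_step \<sigma> (lamp_view G (shd \<omega>))) (stl \<omega>) n"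

text \<open>The same trajectory as a function of a finite prefix of step bits, which makes it measurable.\<close>

fun lamp_traj_list :: "lamp_state \<Rightarrow> step_bits list \<Rightarrow> lamp_state" where
  "lamp_traj_list \<sigma> [] = \<sigma>"
| "lamp_traj_list \<sigma> (e # es) = lamp_traj_list (lamp_step \<sigma> e) es"

lemma lamp_traj_eq_list: "lamp_traj G \<sigma> \<omega> n = lamp_traj_list \<sigma> (stake n (smap (lamp_view G) \<omega>))"
  by (induction n arbitrary: \<sigma> \<omega>) auto

lemma lamp_traj_Suc: "lamp_traj G \<sigma> \<omega> (Suc n) = lamp_step (lamp_traj G \<sigma> \<omega> n) (lamp_view G (\<omega> !! n))"
  by (induction n arbitrary: \<sigma> \<omega>) auto

lemma measurable_lamp_traj:
  assumes "\<And>\<sigma>. f \<sigma> \<in> space N"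
  shows "(\<lambda>\<omega>. f (lamp_traj G \<sigma> \<omega> n)) \<in> measurable (stream_space (measure_pmf M)) N"
proof -
  have view: "smap (lamp_view G) \<in> measurable (stream_space (measure_pmf M)) (stream_space (count_space UNIV))"
    by (rule measurable_smap) simp
  have prefix: "stake n \<in> measurable (stream_space (count_space UNIV)) (count_space (UNIV :: step_bits list set))"
    by (rule measurable_stake)
  have run: "(\<lambda>es. f (lamp_traj_list \<sigma> es)) \<in> measurable (count_space UNIV) N"
    using assms by (auto simp: measurable_count_space_eq1)
  have "(\<lambda>\<omega>. f (lamp_traj G \<sigma> \<omega> n)) = (\<lambda>es. f (lamp_traj_list \<sigma> es)) \<circ> stake n \<circ> smap (lamp_view G)"
    by (auto simp: lamp_traj_eq_list)
  then show ?thesis using measurable_comp[OF view measurable_comp[OF prefix run]] by simp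
qed

definition lamp_op :: "real \<Rightarrow> real \<Rightarrow> (lamp_state \<Rightarrow> ennreal) \<Rightarrow> lamp_state \<Rightarrow> ennreal" where
  "lamp_op p q f \<sigma> = (\<integral>\<^sup>+e. f (lamp_step \<sigma> e) \<partial>pair_pmf (coin_pmf p) (lamp_coin_pmf q))"

lemma nn_integral_lamp_traj:
  assumes "finite (carrier G)" "\<one>\<^bsub>G\<^esub> \<in> carrier G"
  shows "(\<integral>\<^sup>+\<omega>. f (lamp_traj G \<sigma> \<omega> n) \<partial>walk_space p G) = (lamp_op p (1 / real (card (carrier G))) ^^ n) f \<sigma>"
proof (induction n arbitrary: \<sigma>)
  case 0
  interpret prob_space "walk_space p G"
    unfolding walk_space_def by (rule prob_space.prob_space_stream_space[OF prob_space_measure_pmf])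
  show ?case by (simp add: emeasure_space_1)
next
  case (Suc n)
  have "(\<lambda>\<omega>. f (lamp_traj G \<sigma> \<omega> (Suc n))) \<in> borel_measurable (stream_space (measure_pmf (step_pmf p G)))"
    by (rule measurable_lamp_traj) simp
  then have "(\<integral>\<^sup>+\<omega>. f (lamp_traj G \<sigma> \<omega> (Suc n)) \<partial>walk_space p G)
      = (\<integral>\<^sup>+x. \<integral>\<^sup>+\<omega>. f (lamp_traj G \<sigma> (x ## \<omega>) (Suc n)) \<partial>walk_space p G \<partial>measure_pmf (step_pmf p G))"
    unfolding walk_space_def by (rule prob_space.nn_integral_stream_space[OF prob_space_measure_pmf])
  also have "\<dots> = (\<integral>\<^sup>+x. (lamp_op p (1 / real (card (carrier G))) ^^ n) f (lamp_step \<sigma> (lamp_view G x)) \<partial>measure_pmf (step_pmf p G))"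
    using Suc by simp
  also have "\<dots> = lamp_op p (1 / real (card (carrier G))) ((lamp_op p (1 / real (card (carrier G))) ^^ n) f) \<sigma>"
    unfolding lamp_op_def map_step_pmf_lamp_view[OF assms, symmetric] by simp
  finally show ?case by simp
qed

text \<open>Lamps inside the visited range will be randomised again before the \<open>k\<close>-th return; the lamps
  outside it keep the states recorded in \<open>B\<close>.\<close>

definition payoff_outside :: "nat \<Rightarrow> real \<Rightarrow> (int \<Rightarrow> bool) \<Rightarrow> range_state \<Rightarrow> real" where
  "payoff_outside k q B \<tau> = (case \<tau> of (y, lo, hi, c) \<Rightarrow>
     if c = k \<and> y = 0 \<and> (\<forall>z. z < lo \<or> hi < z \<longrightarrow> B z) then q ^ nat (hi - lo + 1) else 0)"

lemma payoff_outside_all_identity: "payoff_outside k q (\<lambda>_. True) = payoff k q"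
  by (auto simp: fun_eq_iff payoff_outside_def payoff_def)

lemma payoff_outside_update_inside:
  "lo \<le> z \<Longrightarrow> z \<le> hi \<Longrightarrow> payoff_outside k q (B(z := v)) (y, lo, hi, c) = payoff_outside k q B (y, lo, hi, c)"
  unfolding payoff_outside_def by auto

lemma payoff_outside_update_adjacent:
  assumes "x = lo - 1 \<or> x = hi + 1" "lo \<le> hi"
  shows "q * payoff_outside k q (B(x := True)) (y, lo, hi, c) = payoff_outside k q B (y, min lo x, max hi x, c)"
    and "payoff_outside k q (B(x := False)) (y, lo, hi, c) = 0"
proof -
  have out: "(z < min lo x \<or> max hi x < z) \<longleftrightarrow> (z < lo \<or> hi < z) \<and> z \<noteq> x" for z
    using assms by auto
  have "nat (max hi x - min lo x + 1) = Suc (nat (hi - lo + 1))" using assms by auto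
  then show "q * payoff_outside k q (B(x := True)) (y, lo, hi, c) = payoff_outside k q B (y, min lo x, max hi x, c)"
    unfolding payoff_outside_def using assms by (auto simp: out)
  show "payoff_outside k q (B(x := False)) (y, lo, hi, c) = 0"
    unfolding payoff_outside_def using assms by auto
qed

lemma payoff_outside_average:
  assumes adjacent: "x = x' + 1 \<or> x = x' - 1" and "lo \<le> x'" "x' \<le> hi" and q: "0 \<le> q" "q \<le> 1"
  shows "(\<integral>\<^sup>+uv. ennreal (payoff_outside k q (B(x := fst uv, x' := snd uv)) (y, lo, hi, c)) \<partial>lamp_coin_pmf q)
    = ennreal (payoff_outside k q B (y, min lo x, max hi x, c))"
proof -
  let ?f = "\<lambda>u. ennreal (payoff_outside k q (B(x := u)) (y, lo, hi, c))"
  have "(\<integral>\<^sup>+uv. ennreal (payoff_outside k q (B(x := fst uv, x' := snd uv)) (y, lo, hi, c)) \<partial>lamp_coin_pmf q)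
      = ?f True * ennreal q + ?f False * ennreal (1 - q)"
    using assms payoff_outside_update_inside[of lo x' hi k q "B(x := _)"]
    by (simp add: lamp_coin_pmf_def nn_integral_pair_pmf' ennreal_mult_convex_comb)
  also have "\<dots> = ennreal (payoff_outside k q B (y, min lo x, max hi x, c))"
  proof (cases "lo \<le> x \<and> x \<le> hi")
    case True
    then show ?thesis
      using q payoff_outside_update_inside[of lo x hi] by (simp add: ennreal_mult_convex_comb)
  next
    case False
    then have "x = lo - 1 \<or> x = hi + 1" "lo \<le> hi" using assms by auto
    from payoff_outside_update_adjacent[OF this, where k = k and q = q and B = B and y = y and c = c]
    show ?thesis using q by (simp add: ennreal_mult'[symmetric] mult.commute)
  qed
  finally show ?thesis .
qed

definition extend_range :: "int \<Rightarrow> range_state \<Rightarrow> range_state" where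
  "extend_range x \<tau> = (case \<tau> of (y, lo, hi, c) \<Rightarrow> (y, min lo x, max hi x, c))"

lemma move_extend_range: "move d (extend_range x \<tau>) = extend_range x (move d \<tau>)"
  by (cases \<tau>) (simp add: extend_range_def move_def min.assoc min.commute min.left_commute
      max.assoc max.commute max.left_commute)

lemma step_op_iter_payoff_outside_average:
  assumes adjacent: "x = x' + 1 \<or> x = x' - 1" and q: "0 \<le> q" "q \<le> 1"
  shows "(\<integral>\<^sup>+uv. (step_op p ^^ n) (\<lambda>\<tau>. ennreal (payoff_outside k q (B(x := fst uv, x' := snd uv)) \<tau>))
      (x', x', x', c) \<partial>lamp_coin_pmf q)
    = (step_op p ^^ n) (\<lambda>\<tau>. ennreal (payoff_outside k q B \<tau>)) (x', min x x', max x x', c)"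
proof -
  let ?visited = "{\<tau>. fst (snd \<tau>) \<le> x' \<and> x' \<le> fst (snd (snd \<tau>))}"
  have closed: "step_closed ?visited"
    unfolding step_closed_def move_def by (auto split: prod.splits)
  have "(\<integral>\<^sup>+uv. (step_op p ^^ n) (\<lambda>\<tau>. ennreal (payoff_outside k q (B(x := fst uv, x' := snd uv)) \<tau>))
      (x', x', x', c) \<partial>lamp_coin_pmf q)
    = (step_op p ^^ n) (\<lambda>\<tau>. \<integral>\<^sup>+uv. ennreal (payoff_outside k q (B(x := fst uv, x' := snd uv)) \<tau>) \<partial>lamp_coin_pmf q)
      (x', x', x', c)"
    by (rule step_op_iter_nn_integral[symmetric])
  also have "\<dots> = (step_op p ^^ n) (\<lambda>\<tau>. ennreal (payoff_outside k q B (extend_range x \<tau>))) (x', x', x', c)"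
    by (rule step_op_iter_cong_on[OF closed])
      (auto simp: extend_range_def payoff_outside_average[OF adjacent _ _ q])
  also have "\<dots> = (step_op p ^^ n) (\<lambda>\<tau>. ennreal (payoff_outside k q B \<tau>)) (extend_range x (x', x', x', c))"
    by (rule step_op_iter_commute[OF move_extend_range]) (simp add: extend_range_def split: prod.splits)
  finally show ?thesis by (simp add: extend_range_def min.commute max.commute)
qed

definition lamp_terminal :: "nat \<Rightarrow> lamp_state \<Rightarrow> ennreal" where
  "lamp_terminal k \<sigma> = (case \<sigma> of (x, B, c) \<Rightarrow> if x = 0 \<and> c = k \<and> (\<forall>z. B z) then 1 else 0)"

lemma lamp_terminal_average:
  assumes "0 \<le> q" "q \<le> 1"
  shows "(\<integral>\<^sup>+v. lamp_terminal k (x, B(x := v), c) \<partial>bernoulli_pmf q) = ennreal (payoff_outside k q B (x, x, x, c))"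
proof -
  define P where "P = (x = 0 \<and> c = k \<and> (\<forall>z. z < x \<or> x < z \<longrightarrow> B z))"
  have all_updated: "(\<forall>z. (B(x := v)) z) \<longleftrightarrow> v \<and> (\<forall>z. z < x \<or> x < z \<longrightarrow> B z)" for v
  proof
    assume H: "\<forall>z. (B(x := v)) z"
    have v using spec[OF H, of x] by simp
    moreover have "B z" if "z < x \<or> x < z" for z using spec[OF H, of z] that by auto
    ultimately show "v \<and> (\<forall>z. z < x \<or> x < z \<longrightarrow> B z)" by blast
  next
    assume H: "v \<and> (\<forall>z. z < x \<or> x < z \<longrightarrow> B z)"
    show "\<forall>z. (B(x := v)) z"
    proof
      fix z
      show "(B(x := v)) z" using H by (cases z x rule: linorder_cases) auto
    qed
  qed
  have "lamp_terminal k (x, B(x := v), c) = (if v \<and> P then 1 else 0)" for v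
    unfolding lamp_terminal_def prod.case all_updated P_def by (simp only: conj_ac)
  moreover have "nat (x - x + 1) = 1" by simp
  then have "payoff_outside k q B (x, x, x, c) = (if P then q else 0)"
    unfolding payoff_outside_def prod.case P_def by (simp only: conj_ac power_one_right)
  ultimately show ?thesis using assms by simp
qed

lemma lamp_op_step:
  assumes p: "0 \<le> p" "p \<le> 1" and q: "0 \<le> q" "q \<le> 1"
    and next_state: "\<And>x' c'. x' = x + 1 \<or> x' = x - 1 \<Longrightarrow>
      (\<integral>\<^sup>+uv. f (x', B(x := fst uv, x' := snd uv), c') \<partial>lamp_coin_pmf q)
      = (\<integral>\<^sup>+uv. (step_op p ^^ n) (\<lambda>\<tau>. ennreal (payoff_outside k q (B(x := fst uv, x' := snd uv)) \<tau>))
          (x', x', x', c') \<partial>lamp_coin_pmf q)"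
  shows "lamp_op p q f (x, B, c) = (step_op p ^^ Suc n) (\<lambda>\<tau>. ennreal (payoff_outside k q B \<tau>)) (x, x, x, c)"
proof -
  have step: "(\<integral>\<^sup>+uv. f (lamp_step (x, B, c) (cd, uv)) \<partial>lamp_coin_pmf q)
      = (step_op p ^^ n) (\<lambda>\<tau>. ennreal (payoff_outside k q B \<tau>)) (move (incr x (fst cd) (snd cd)) (x, x, x, c))"
    for cd
  proof -
    obtain C D where cd: "cd = (C, D)" by (cases cd)
    define x' where "x' = x + incr x C D"
    have adjacent: "x' = x + 1 \<or> x' = x - 1" "x = x' + 1 \<or> x = x' - 1"
      unfolding x'_def incr_def by auto
    have "(\<integral>\<^sup>+uv. f (lamp_step (x, B, c) (cd, uv)) \<partial>lamp_coin_pmf q)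
        = (\<integral>\<^sup>+uv. f (x', B(x := fst uv, x' := snd uv), if x' = 0 then Suc c else c) \<partial>lamp_coin_pmf q)"
      by (simp add: lamp_step_def x'_def cd case_prod_beta)
    also have "\<dots> = (step_op p ^^ n) (\<lambda>\<tau>. ennreal (payoff_outside k q B \<tau>))
        (x', min x x', max x x', if x' = 0 then Suc c else c)"
      unfolding next_state[OF adjacent(1)] by (rule step_op_iter_payoff_outside_average[OF adjacent(2) q])
    finally show ?thesis by (simp add: move_def x'_def cd)
  qed
  have "lamp_op p q f (x, B, c)
      = (\<integral>\<^sup>+cd. \<integral>\<^sup>+uv. f (lamp_step (x, B, c) (cd, uv)) \<partial>lamp_coin_pmf q \<partial>coin_pmf p)"
    unfolding lamp_op_def nn_integral_pair_pmf' ..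
  also have "\<dots> = (step_op p ^^ Suc n) (\<lambda>\<tau>. ennreal (payoff_outside k q B \<tau>)) (x, x, x, c)"
    unfolding step by (simp add: step_op_eq_nn_integral[OF p])
  finally show ?thesis .
qed

lemma lamp_op_iter_terminal:
  assumes p: "0 \<le> p" "p \<le> 1" and q: "0 \<le> q" "q \<le> 1"
  shows "(lamp_op p q ^^ Suc n) (lamp_terminal k) (x, B, c)
    = (step_op p ^^ Suc n) (\<lambda>\<tau>. ennreal (payoff_outside k q B \<tau>)) (x, x, x, c)"
proof (induction n arbitrary: x B c)
  case 0
  have "(lamp_op p q ^^ Suc 0) (lamp_terminal k) (x, B, c) = lamp_op p q (lamp_terminal k) (x, B, c)"
    by simp
  also have "\<dots> = (step_op p ^^ Suc 0) (\<lambda>\<tau>. ennreal (payoff_outside k q B \<tau>)) (x, x, x, c)"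
  proof (rule lamp_op_step[OF p q])
    fix x' c'
    have "(\<integral>\<^sup>+uv. lamp_terminal k (x', B(x := fst uv, x' := snd uv), c') \<partial>lamp_coin_pmf q)
        = (\<integral>\<^sup>+u. ennreal (payoff_outside k q (B(x := u)) (x', x', x', c')) \<partial>bernoulli_pmf q)"
      unfolding lamp_coin_pmf_def nn_integral_pair_pmf' using lamp_terminal_average[OF q] by simp
    also have "\<dots> = (\<integral>\<^sup>+uv. ennreal (payoff_outside k q (B(x := fst uv, x' := snd uv)) (x', x', x', c')) \<partial>lamp_coin_pmf q)"
      using q payoff_outside_update_inside[of x' x' x' k q "B(x := _)"]
      by (simp add: lamp_coin_pmf_def nn_integral_pair_pmf' ennreal_mult_convex_comb)
    finally show "(\<integral>\<^sup>+uv. lamp_terminal k (x', B(x := fst uv, x' := snd uv), c') \<partial>lamp_coin_pmf q)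
        = (\<integral>\<^sup>+uv. (step_op p ^^ 0) (\<lambda>\<tau>. ennreal (payoff_outside k q (B(x := fst uv, x' := snd uv)) \<tau>))
            (x', x', x', c') \<partial>lamp_coin_pmf q)" by simp
  qed
  finally show ?case .
next
  case (Suc n)
  have "(lamp_op p q ^^ Suc (Suc n)) (lamp_terminal k) (x, B, c)
      = lamp_op p q ((lamp_op p q ^^ Suc n) (lamp_terminal k)) (x, B, c)"
    by simp
  also have "\<dots> = (step_op p ^^ Suc (Suc n)) (\<lambda>\<tau>. ennreal (payoff_outside k q B \<tau>)) (x, x, x, c)"
    by (rule lamp_op_step[OF p q]) (simp only: Suc.IH)
  finally show ?case .
qed

section \<open>Return times\<close>

fun returns :: "(bool \<times> bool \<times> 'a \<times> 'a) stream \<Rightarrow> nat \<Rightarrow> nat" where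
  "returns \<omega> 0 = 0"
| "returns \<omega> (Suc n) = (if Spos \<omega> (Suc n) = 0 then Suc (returns \<omega> n) else returns \<omega> n)"

lemma returns_constant:
  "m \<le> n \<Longrightarrow> (\<And>j. m < j \<Longrightarrow> j \<le> n \<Longrightarrow> Spos \<omega> j \<noteq> 0) \<Longrightarrow> returns \<omega> n = returns \<omega> m"
proof (induction n)
  case (Suc n)
  show ?case
  proof (cases "m = Suc n")
    case False
    then have "m \<le> n" "Spos \<omega> (Suc n) \<noteq> 0" using Suc.prems by (simp_all del: Spos.simps)
    then show ?thesis using Suc by (simp del: Spos.simps)
  qed simp
qed simp

lemma returns_next_zero:
  assumes "n' < n" "Spos \<omega> n = 0" "\<And>j. n' < j \<Longrightarrow> j < n \<Longrightarrow> Spos \<omega> j \<noteq> 0"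
  shows "returns \<omega> n = Suc (returns \<omega> n')"
proof -
  obtain n1 where n: "n = Suc n1" using assms(1) by (cases n) auto
  have "returns \<omega> n1 = returns \<omega> n'" using assms n by (intro returns_constant) auto
  then show ?thesis using assms(2) n by simp
qed

lemma last_zero_before:
  assumes "0 < n"
  obtains n' where "n' < n" "Spos \<omega> n' = 0" "\<And>j. n' < j \<Longrightarrow> j < n \<Longrightarrow> Spos \<omega> j \<noteq> 0"
proof -
  define Z where "Z = {j. j < n \<and> Spos \<omega> j = 0}"
  have "finite Z" "0 \<in> Z" unfolding Z_def using assms by auto
  then have max: "Max Z \<in> Z" "\<And>j. j \<in> Z \<Longrightarrow> j \<le> Max Z" by (auto intro: Max_in)
  show ?thesis
  proof (rule that)
    show "Max Z < n" "Spos \<omega> (Max Z) = 0" using max(1) by (auto simp: Z_def)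
    show "Spos \<omega> j \<noteq> 0" if "Max Z < j" "j < n" for j
    proof
      assume "Spos \<omega> j = 0"
      then have "j \<le> Max Z" using max(2) that(2) by (simp add: Z_def)
      then show False using that(1) by simp
    qed
  qed
qed

lemma Inf_enat_image_eq_enat: "Inf (enat ` S) = enat n \<longleftrightarrow> n \<in> S \<and> (\<forall>m\<in>S. n \<le> m)"
proof
  assume Inf: "Inf (enat ` S) = enat n"
  then have "S \<noteq> {}" by (auto simp: Inf_enat_def)
  then have "Inf (enat ` S) \<in> enat ` S" by (auto simp: Inf_enat_def intro: LeastI)
  moreover have "Inf (enat ` S) \<le> enat m" if "m \<in> S" for m using that by (simp add: Inf_lower)
  ultimately show "n \<in> S \<and> (\<forall>m\<in>S. n \<le> m)" using Inf by auto
next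
  assume "n \<in> S \<and> (\<forall>m\<in>S. n \<le> m)"
  then show "Inf (enat ` S) = enat n"
    by (intro antisym Inf_lower Inf_greatest) auto
qed

lemma rho_Suc_eq_Inf: "rho \<omega> (Suc k) = Inf (enat ` {m. rho \<omega> k < enat m \<and> Spos \<omega> m = 0})"
  by (simp add: setcompr_eq_image)

lemma rho_eq_enat_iff: "rho \<omega> k = enat n \<longleftrightarrow> Spos \<omega> n = 0 \<and> returns \<omega> n = k"
proof (induction k arbitrary: n)
  case 0
  have "n = 0" if "Spos \<omega> n = 0" "returns \<omega> n = 0"
    using that by (cases n) (simp_all del: Spos.simps)
  then show ?case by (auto simp: zero_enat_def)
next
  case (Suc k)
  show ?case
  proof
    assume "rho \<omega> (Suc k) = enat n"
    then have n: "rho \<omega> k < enat n" "Spos \<omega> n = 0"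
      and first: "\<And>m. rho \<omega> k < enat m \<Longrightarrow> Spos \<omega> m = 0 \<Longrightarrow> n \<le> m"
      unfolding rho_Suc_eq_Inf Inf_enat_image_eq_enat by auto
    then obtain n' where n': "rho \<omega> k = enat n'" by (cases "rho \<omega> k") auto
    then have "Spos \<omega> n' = 0" "returns \<omega> n' = k" using Suc.IH by auto
    moreover have "Spos \<omega> j \<noteq> 0" if "n' < j" "j < n" for j
      using first[of j] that n' by fastforce
    ultimately show "Spos \<omega> n = 0 \<and> returns \<omega> n = Suc k"
      using n n' by (auto intro: returns_next_zero)
  next
    assume n: "Spos \<omega> n = 0 \<and> returns \<omega> n = Suc k"
    then have "0 < n" by (cases n) auto
    then obtain n' where n': "n' < n" "Spos \<omega> n' = 0" and gap: "\<And>j. n' < j \<Longrightarrow> j < n \<Longrightarrow> Spos \<omega> j \<noteq> 0"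
      using last_zero_before[of n \<omega>] by blast
    have "returns \<omega> n = Suc (returns \<omega> n')"
      using n gap by (intro returns_next_zero[OF n'(1)]) auto
    then have "returns \<omega> n' = k" using n by simp
    then have "rho \<omega> k = enat n'" using Suc.IH n' by simp
    moreover have "n \<le> m" if "n' < m" "Spos \<omega> m = 0" for m
      using gap[of m] that by (meson not_le)
    ultimately show "rho \<omega> (Suc k) = enat n"
      unfolding rho_Suc_eq_Inf Inf_enat_image_eq_enat using n n' by auto
  qed
qed

lemma lamp_traj_start:
  "lamp_traj G (0, \<lambda>_. True, 0) \<omega> n = (Spos \<omega> n, \<lambda>i. Lamps G \<omega> n i = \<one>\<^bsub>G\<^esub>, returns \<omega> n)"
proof (induction n)
  case (Suc n)
  obtain C D U V where \<omega>: "\<omega> !! n = (C, D, U, V)" by (cases "\<omega> !! n") auto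
  show ?case
    unfolding lamp_traj_Suc Suc by (auto simp: lamp_step_def lamp_view_def \<omega> fun_eq_iff)
qed simp

lemma lamp_terminal_lamp_traj_start:
  "lamp_terminal k (lamp_traj G (0, \<lambda>_. True, 0) \<omega> n) = indicator {\<omega>. rho \<omega> k = enat n \<and> is_id_at G \<omega> n} \<omega>"
  by (auto simp: lamp_traj_start lamp_terminal_def rho_eq_enat_iff is_id_at_def fun_eq_iff)

lemma sets_return_to_identity_at:
  "{\<omega>. rho \<omega> k = enat n \<and> is_id_at G \<omega> n} \<inter> space (walk_space p G) \<in> sets (walk_space p G)"
proof -
  have "(\<lambda>\<omega>. lamp_terminal k (lamp_traj G (0, \<lambda>_. True, 0) \<omega> n)) \<in> borel_measurable (walk_space p G)"
    unfolding walk_space_def by (rule measurable_lamp_traj) simp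
  then have "(indicator {\<omega>. rho \<omega> k = enat n \<and> is_id_at G \<omega> n} :: _ \<Rightarrow> ennreal) \<in> borel_measurable (walk_space p G)"
    by (simp add: lamp_terminal_lamp_traj_start)
  then show ?thesis by (simp add: borel_measurable_indicator_iff)
qed

lemma emeasure_return_to_identity_at:
  assumes G: "finite (carrier G)" "\<one>\<^bsub>G\<^esub> \<in> carrier G" and p: "0 \<le> p" "p \<le> 1" and "1 \<le> k"
  shows "emeasure (walk_space p G) ({\<omega>. rho \<omega> k = enat n \<and> is_id_at G \<omega> n} \<inter> space (walk_space p G))
    = (step_op p ^^ n) (\<lambda>\<tau>. ennreal (payoff k (1 / real (card (carrier G))) \<tau>)) (0, 0, 0, 0)"
proof -
  let ?M = "walk_space p G" and ?q = "1 / real (card (carrier G))"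
  have "0 < card (carrier G)" using G card_gt_0_iff by blast
  then have q: "0 \<le> ?q" "?q \<le> 1" by simp_all
  have "emeasure ?M ({\<omega>. rho \<omega> k = enat n \<and> is_id_at G \<omega> n} \<inter> space ?M)
      = (\<integral>\<^sup>+\<omega>. indicator ({\<omega>. rho \<omega> k = enat n \<and> is_id_at G \<omega> n} \<inter> space ?M) \<omega> \<partial>?M)"
    by (rule nn_integral_indicator[OF sets_return_to_identity_at, symmetric])
  also have "\<dots> = (\<integral>\<^sup>+\<omega>. lamp_terminal k (lamp_traj G (0, \<lambda>_. True, 0) \<omega> n) \<partial>?M)"
    by (intro nn_integral_cong) (simp add: lamp_terminal_lamp_traj_start split: split_indicator)
  also have "\<dots> = (lamp_op p ?q ^^ n) (lamp_terminal k) (0, \<lambda>_. True, 0)"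
    by (rule nn_integral_lamp_traj[OF G])
  also have "\<dots> = (step_op p ^^ n) (\<lambda>\<tau>. ennreal (payoff k ?q \<tau>)) (0, 0, 0, 0)"
    using lamp_op_iter_terminal[OF p q, of _ k 0 "\<lambda>_. True" 0] \<open>1 \<le> k\<close>
    by (cases n) (auto simp: lamp_terminal_def payoff_def payoff_outside_all_identity)
  finally show ?thesis .
qed

lemma emeasure_return_to_identity:
  assumes G: "finite (carrier G)" "\<one>\<^bsub>G\<^esub> \<in> carrier G" and p: "0 \<le> p" "p \<le> 1" and "1 \<le> k"
  shows "emeasure (walk_space p G) {\<omega> \<in> space (walk_space p G). \<exists>n. rho \<omega> k = enat n \<and> is_id_at G \<omega> n}
    = potential p (\<lambda>\<tau>. ennreal (payoff k (1 / real (card (carrier G))) \<tau>)) (0, 0, 0, 0)"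
proof -
  let ?M = "walk_space p G"
  define A where "A n = {\<omega>. rho \<omega> k = enat n \<and> is_id_at G \<omega> n} \<inter> space ?M" for n
  have "disjoint_family A"
    unfolding disjoint_family_on_def A_def by auto
  then have "emeasure ?M (\<Union>n. A n) = (\<Sum>n. emeasure ?M (A n))"
    unfolding A_def using sets_return_to_identity_at by (intro suminf_emeasure[symmetric]) auto
  moreover have "{\<omega> \<in> space ?M. \<exists>n. rho \<omega> k = enat n \<and> is_id_at G \<omega> n} = (\<Union>n. A n)"
    unfolding A_def by auto
  ultimately show ?thesis
    unfolding potential_def A_def emeasure_return_to_identity_at[OF assms] by simp
qed

context biased_walk
begin

lemma potential_payoff_bounds:
  assumes F: "1 < F" and k: "2 \<le> k"
  defines "P \<equiv> enn2real (potential p (\<lambda>\<tau>. ennreal (payoff k (1 / F) \<tau>)) (0, 0, 0, 0))"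
  shows "exp (-2) / F ^ 5 / real k powr (2 * (ln F / ln lam)) \<le> P"
    and "P \<le> upper_const F / real k powr (2 * (ln F / ln lam))"
proof -
  interpret lamp_payoff p k "1 / F" using F by unfold_locales auto
  let ?S = "\<Sum>m. 2 * (1 / F) ^ (2 * m + 1) * low_excursion_prob m ^ k"
  have terms_nonneg: "0 \<le> 2 * (1 / F) ^ (2 * m + 1) * low_excursion_prob m ^ k" for m
    using F low_excursion_prob_bounds[of m] by simp
  have "potential p (\<lambda>\<tau>. ennreal (payoff k (1 / F) \<tau>)) (0, 0, 0, 0) \<le> ennreal ?S"
    using potential_payoff_upper_bound terms_nonneg upper_series_summable[OF F]
    by (simp add: suminf_ennreal2)
  then have "P \<le> ?S" unfolding P_def using terms_nonneg upper_series_summable[OF F]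
    by (simp add: enn2real_leI suminf_nonneg)
  also have "?S \<le> upper_const F / real k powr (2 * (ln F / ln lam))"
    using upper_series_le[OF F] k by simp
  finally show "P \<le> upper_const F / real k powr (2 * (ln F / ln lam))" .
  obtain m where m: "exp (-2) / F ^ 5 / real k powr (2 * (ln F / ln lam)) \<le> (1 / F) ^ (2 * m + 1) * return_prob m ^ k"
    using lower_bound_term[of F k] F k by auto
  have "ennreal ((1 / F) ^ (2 * m + 1) * return_prob m ^ k) \<le> potential p (\<lambda>\<tau>. ennreal (payoff k (1 / F) \<tau>)) (0, 0, 0, 0)"
    by (rule potential_payoff_lower_bound)
  moreover have "potential p (\<lambda>\<tau>. ennreal (payoff k (1 / F) \<tau>)) (0, 0, 0, 0) < \<top>"
    using \<open>potential p _ _ \<le> ennreal ?S\<close> by (simp add: le_less_trans)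
  ultimately have "enn2real (ennreal ((1 / F) ^ (2 * m + 1) * return_prob m ^ k)) \<le> P"
    unfolding P_def by (rule enn2real_mono)
  then have "(1 / F) ^ (2 * m + 1) * return_prob m ^ k \<le> P"
    using F return_prob_bounds[of m] by simp
  with m show "exp (-2) / F ^ 5 / real k powr (2 * (ln F / ln lam)) \<le> P" by linarith
qed

end

theorem corollary2p6:
  fixes G :: "('a, 'b) monoid_scheme" (structure) and p :: real
  assumes "group G" and "finite (carrier G)" and "card (carrier G) \<ge> 2"
    and "1/2 < p" and "p < 1"
  shows "\<exists>k0::nat. \<exists>c C :: real. 0 < c \<and> c \<le> C \<and>
    (\<forall>k::nat. k \<ge> k0 \<longrightarrow>
      (let lam = p / (1 - p); alpha = ln (real (card (carrier G))) / ln lam;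
           P = measure (walk_space p G)
                 {\<omega> \<in> space (walk_space p G). \<exists>n. rho \<omega> k = enat n \<and> is_id_at G \<omega> n}
       in c / real k powr (2 * alpha) \<le> P \<and> P \<le> C / real k powr (2 * alpha)))"
proof -
  interpret biased_walk p using assms(4,5) by unfold_locales
  define F where "F = real (card (carrier G))"
  define c where "c = exp (-2) / F ^ 5"
  have F: "1 < F" using assms(3) by (simp add: F_def)
  have one: "\<one> \<in> carrier G" using assms(1) by (simp add: group.is_monoid monoid.one_closed)
  have P: "measure (walk_space p G) {\<omega> \<in> space (walk_space p G). \<exists>n. rho \<omega> k = enat n \<and> is_id_at G \<omega> n}
      = enn2real (potential p (\<lambda>\<tau>. ennreal (payoff k (1 / F) \<tau>)) (0, 0, 0, 0))" if "1 \<le> k" for k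
    unfolding measure_def F_def using emeasure_return_to_identity[OF assms(2) one p_bounds that] by simp
  have bounds: "c / real k powr (2 * (ln F / ln lam)) \<le> enn2real (potential p (\<lambda>\<tau>. ennreal (payoff k (1 / F) \<tau>)) (0, 0, 0, 0))
      \<and> enn2real (potential p (\<lambda>\<tau>. ennreal (payoff k (1 / F) \<tau>)) (0, 0, 0, 0)) \<le> upper_const F / real k powr (2 * (ln F / ln lam))"
    if "2 \<le> k" for k
    unfolding c_def using potential_payoff_bounds[OF F that] by blast
  have "c / real 2 powr (2 * (ln F / ln lam)) \<le> upper_const F / real 2 powr (2 * (ln F / ln lam))"
    using bounds[of 2] by (blast intro: order_trans)
  then have "c \<le> upper_const F" by (simp add: divide_le_cancel)
  moreover have "0 < c" using F by (simp add: c_def)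
  ultimately show ?thesis
    using bounds P unfolding Let_def lam_def[symmetric] F_def[symmetric]
    by (intro exI[of _ 2] exI[of _ c] exI[of _ "upper_const F"]) auto
qed

end
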